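(* Let $n=2$, $S=K[x,y]$, $\mathbf t,\mathbf k\in\mathbb N^2$ with $\mathbf 1\le\mathbf k\le\mathbf t+\mathbf 1$, and let $I$ be a positively $\mathbf t$-determined monomial ideal. Then $H^2\mathcal N^{\mathbf k}_{\mathbf t}(S/I)=0$ if and only if $(S/I)_{\mathbf t+\mathbf 1-\mathbf k}=0$.
   Context: $K$ a field, $S$ is $\mathbb Z^2$-graded with $\deg x=\varepsilon_1$, $\deg y=\varepsilon_2$; $\mathbf 1=(1,1)$; componentwise order; $M(\mathbf a)_{\mathbf r}=M_{\mathbf a+\mathbf r}$. A monomial ideal $I$ is positively $\mathbf t$-determined if each minimal generator $x^{a_1}y^{a_2}$ has $\mathbf a\le\mathbf t$; an $\mathbb N^2$-graded module is positively $\mathbf t$-determined if multiplication by the $i$-th variable $M_{\mathbf a}\to M_{\mathbf a+\varepsilon_i}$ is bijective whenever $a_i\ge t_i$. For order-preserving $q:\mathbb N^2\to\mathbb Z^2$, $(q^*M)_{\mathbf a}=M_{q(\mathbf a)}$ with monomials of degree $\mathbf b$ acting via the monomial of degree $q(\mathbf a+\mathbf b)-q(\mathbf a)$; $p_{\mathbf t}(\mathbf a)=(\min(a_i,t_i))_i$. Chain complexes, $H^iC=H_{-i}C$. Nakayama functor: $P_{t\varepsilon_j}$ is the complex $x_j^tS\hookrightarrow S$ ($S$ in degree $0$, $x_1=x,x_2=y$); for $\mathbf k\in\{0,1\}^2$, $P^{\mathbf k}_{\mathbf t}=\bigotimes_jP_{t_j\varepsilon_j}^{\otimes k_j}$ and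 $\mathcal N^{\mathbf k}_{\mathbf t}(C)=p_{\mathbf t}^*\underline{\operatorname{Hom}}_S(P^{\mathbf k}_{\mathbf t+\mathbf 1},C(-\mathbf k))$; for $\mathbf k\in\mathbb N^2$, $\mathcal N^{\mathbf k}_{\mathbf t}=(\mathcal N^{\varepsilon_1}_{\mathbf t})^{\circ k_1}\circ(\mathcal N^{\varepsilon_2}_{\mathbf t})^{\circ k_2}$. *)

theory Defs
  imports "Jordan_Normal_Form.Matrix"
begin

text \<open>Z^2-graded chain complexes of graded K[x,y]-modules with finite-dimensional
homogeneous pieces, written in coordinates.  For homological degree m and multidegree a,
gdim C m a is the K-dimension of (C_m)_a; gdif C m a is the matrix of the differential
(C_m)_a to (C_(m-1))_a; gx C m a (resp. gy C m a) is the matrix of multiplication by x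
(resp. y), from (C_m)_a to (C_m)_(a+e1) (resp. (C_m)_(a+e2)).\<close>

type_synonym mdeg = "int \<times> int"

record 'k gcx =
  gdim :: "int \<Rightarrow> mdeg \<Rightarrow> nat"
  gdif :: "int \<Rightarrow> mdeg \<Rightarrow> 'k mat"
  gx   :: "int \<Rightarrow> mdeg \<Rightarrow> 'k mat"
  gy   :: "int \<Rightarrow> mdeg \<Rightarrow> 'k mat"

definition mv :: "nat \<Rightarrow> mdeg \<Rightarrow> int \<Rightarrow> mdeg" where
  "mv j a c = (if j = 1 then (fst a + c, snd a) else (fst a, snd a + c))"

definition gact :: "'k gcx \<Rightarrow> nat \<Rightarrow> int \<Rightarrow> mdeg \<Rightarrow> 'k mat" where
  "gact C j = (if j = 1 then gx C else gy C)"

fun gactpow :: "('k::semiring_1) gcx \<Rightarrow> nat \<Rightarrow> nat \<Rightarrow> int \<Rightarrow> mdeg \<Rightarrow> 'k mat" where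
  "gactpow C j 0 m a = 1\<^sub>m (gdim C m a)"
| "gactpow C j (Suc n) m a = gact C j m (mv j a (int n)) * gactpow C j n m a"

text \<open>Monomial ideals of K[x,y], represented by their sets of exponents (up-closed subsets of N^2).\<close>

definition le2 :: "nat \<times> nat \<Rightarrow> nat \<times> nat \<Rightarrow> bool" where
  "le2 a b \<longleftrightarrow> fst a \<le> fst b \<and> snd a \<le> snd b"

definition monomial_ideal_exps :: "(nat \<times> nat) set \<Rightarrow> bool" where
  "monomial_ideal_exps E \<longleftrightarrow> (\<forall>a\<in>E. \<forall>b. le2 a b \<longrightarrow> b \<in> E)"

definition min_gens :: "(nat \<times> nat) set \<Rightarrow> (nat \<times> nat) set" where
  "min_gens E = {a \<in> E. \<forall>b\<in>E. le2 b a \<longrightarrow> b = a}"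

definition pos_t_determined_ideal :: "nat \<times> nat \<Rightarrow> (nat \<times> nat) set \<Rightarrow> bool" where
  "pos_t_determined_ideal t E \<longleftrightarrow> monomial_ideal_exps E \<and> (\<forall>a\<in>min_gens E. le2 a t)"

text \<open>S/I as a complex concentrated in homological degree 0\<close>
definition in_quot :: "(nat \<times> nat) set \<Rightarrow> mdeg \<Rightarrow> bool" where
  "in_quot E a \<longleftrightarrow> 0 \<le> fst a \<and> 0 \<le> snd a \<and> (nat (fst a), nat (snd a)) \<notin> E"

definition qdim :: "(nat \<times> nat) set \<Rightarrow> int \<Rightarrow> mdeg \<Rightarrow> nat" where
  "qdim E m a = (if m = 0 \<and> in_quot E a then 1 else 0)"

definition qact :: "(nat \<times> nat) set \<Rightarrow> nat \<Rightarrow> int \<Rightarrow> mdeg \<Rightarrow> 'k::semiring_1 mat" where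
  "qact E j m a = (if m = 0 \<and> in_quot E a \<and> in_quot E (mv j a 1) then 1\<^sub>m 1
                   else 0\<^sub>m (qdim E m (mv j a 1)) (qdim E m a))"

definition quot_cx :: "(nat \<times> nat) set \<Rightarrow> 'k::semiring_1 gcx" where
  "quot_cx E = \<lparr> gdim = qdim E,
                 gdif = (\<lambda>m a. 0\<^sub>m (qdim E (m - 1) a) (qdim E m a)),
                 gx = qact E 1, gy = qact E 2 \<rparr>"

definition twist :: "'k gcx \<Rightarrow> nat \<Rightarrow> int \<Rightarrow> 'k gcx" where
  "twist C j c = \<lparr> gdim = (\<lambda>m a. gdim C m (mv j a c)),
                   gdif = (\<lambda>m a. gdif C m (mv j a c)),
                   gx = (\<lambda>m a. gx C m (mv j a c)),
                   gy = (\<lambda>m a. gy C m (mv j a c)) \<rparr>"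

text \<open>Internal Hom complex Hom_S(P, D), P = (x_j^s S \<hookrightarrow> S), S in homological degree 0.
 Hom(P,D)_m = Hom_S(S, D_m) \<oplus> Hom_S(x_j^s S, D_(m+1)); using the canonical identifications
 Hom_S(S,M) = M and Hom_S(x_j^s S, M) = M(s e_j) (f \<mapsto> f(x_j^s)), the degree-a piece is
 (D_m)_a \<oplus> (D_(m+1))_(a + s e_j), and the Hom differential df = d\<circ>f - (-1)^m f\<circ>d_P is
 (u,v) \<mapsto> (d u, d v - (-1)^m x_j^s u).\<close>
definition homP :: "'k::comm_ring_1 gcx \<Rightarrow> nat \<Rightarrow> nat \<Rightarrow> 'k gcx" where
  "homP D j s =
    (let hd = (\<lambda>m a. gdim D m a + gdim D (m + 1) (mv j a (int s)));
         ha = (\<lambda>i m a. four_block_mat (gact D i m a)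
                   (0\<^sub>m (gdim D m (mv i a 1)) (gdim D (m + 1) (mv j a (int s))))
                   (0\<^sub>m (gdim D (m + 1) (mv i (mv j a (int s)) 1)) (gdim D m a))
                   (gact D i (m + 1) (mv j a (int s))))
     in \<lparr> gdim = hd,
          gdif = (\<lambda>m a. four_block_mat (gdif D m a)
                   (0\<^sub>m (gdim D (m - 1) a) (gdim D (m + 1) (mv j a (int s))))
                   (if even m then - gactpow D j s m a else gactpow D j s m a)
                   (gdif D (m + 1) (mv j a (int s)))),
          gx = ha 1, gy = ha 2 \<rparr>)"

text \<open>p_t(a) = (min(a_i, t_i))_i and the pullback p_t^*, an N^2-graded module
 (viewed as Z^2-graded, zero outside N^2).\<close>
definition ptrunc :: "nat \<times> nat \<Rightarrow> mdeg \<Rightarrow> mdeg" where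
  "ptrunc t a = (min (fst a) (int (fst t)), min (snd a) (int (snd t)))"

definition nonneg :: "mdeg \<Rightarrow> bool" where
  "nonneg a \<longleftrightarrow> 0 \<le> fst a \<and> 0 \<le> snd a"

definition tcomp :: "nat \<times> nat \<Rightarrow> nat \<Rightarrow> nat" where
  "tcomp t j = (if j = 1 then fst t else snd t)"

definition acomp :: "mdeg \<Rightarrow> nat \<Rightarrow> int" where
  "acomp a j = (if j = 1 then fst a else snd a)"

definition pull :: "nat \<times> nat \<Rightarrow> 'k::semiring_1 gcx \<Rightarrow> 'k gcx" where
  "pull t C =
    (let pd = (\<lambda>m a. if nonneg a then gdim C m (ptrunc t a) else 0);
         pa = (\<lambda>j m a. if nonneg a then
                  (if acomp a j \<ge> int (tcomp t j) then 1\<^sub>m (gdim C m (ptrunc t a))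
                   else gact C j m (ptrunc t a))
                else 0\<^sub>m (pd m (mv j a 1)) 0)
     in \<lparr> gdim = pd,
          gdif = (\<lambda>m a. if nonneg a then gdif C m (ptrunc t a) else 0\<^sub>m 0 0),
          gx = pa 1, gy = pa 2 \<rparr>)"

definition nak1 :: "nat \<times> nat \<Rightarrow> nat \<Rightarrow> 'k::comm_ring_1 gcx \<Rightarrow> 'k gcx" where
  "nak1 t j C = pull t (homP (twist C j (-1)) j (tcomp t j + 1))"

definition nak :: "nat \<times> nat \<Rightarrow> nat \<times> nat \<Rightarrow> 'k::comm_ring_1 gcx \<Rightarrow> 'k gcx" where
  "nak t k C = ((nak1 t 1) ^^ fst k) (((nak1 t 2) ^^ snd k) C)"

definition homology_zero :: "'k::field gcx \<Rightarrow> int \<Rightarrow> bool" where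
  "homology_zero C m \<longleftrightarrow> (\<forall>a.
     {v \<in> carrier_vec (gdim C m a). gdif C m a *\<^sub>v v = 0\<^sub>v (gdim C (m - 1) a)}
     \<subseteq> {gdif C (m + 1) a *\<^sub>v w | w. w \<in> carrier_vec (gdim C (m + 1) a)})"

definition cohomology_zero :: "'k::field gcx \<Rightarrow> int \<Rightarrow> bool" where
  "cohomology_zero C i \<longleftrightarrow> homology_zero C (- i)"

end

theory Submission
  imports Defs
begin

(* Every complex occurring in the statement is a "cube complex": there is a length n and a
   predicate P such that, in multidegree a, the basis of the homological degree -m part consists
   of the 0/1-words w of length n with m ones and P a w; the differential is the Koszul
   differential (turning a zero of w into a one, with the usual sign), and x and y act as the
   identity on common basis words.

   1. Cube complexes and the matrix calculus needed to compute with them.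
   2. Closure: Hom_S(x_j^s S -> S, C) of a cube complex C appends one letter, and the pullback
      p_t^* restricts the predicate; hence N^{e_j}_t maps cube complexes to cube complexes.
   3. S/I is a cube complex of length 0, and iterating gives the closed form
      N^k_t(S/I) = cube_cx (k1+k2) (nak_pred t E k1).
   4. Homology of cube complexes: a contracting homotopy in one degree gives exactness there,
      and a cycle in a degree that receives no boundaries gives non-exactness.
   5. Homological degree -2.  If (S/I)_{t+1-k} is nonzero, in multidegree k-1 the all-ones
      vector is a cycle which is not a boundary.  If it is zero, no basis word has ones in both
      the x-block and the y-block, and toggling a "pivot" letter is a contracting homotopy. *)


section \<open>Cube complexes\<close>

text \<open>All 0/1-words of length n, words starting with 0 first (this order makes the
  matrices of the Hom complex block matrices).\<close>
fun bool_words :: "nat \<Rightarrow> bool list list" where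
  "bool_words 0 = [[]]"
| "bool_words (Suc n) = map (Cons False) (bool_words n) @ map (Cons True) (bool_words n)"

lemma set_bool_words: "set (bool_words n) = {w. length w = n}"
proof (induction n)
  case 0 then show ?case by auto
next
  case (Suc n)
  show ?case
  proof (intro Set.set_eqI iffI)
    fix w :: "bool list" assume "w \<in> set (bool_words (Suc n))"
    then show "w \<in> {w. length w = Suc n}" using Suc by auto
  next
    fix w :: "bool list" assume "w \<in> {w. length w = Suc n}"
    then obtain b x where "w = b # x" "length x = n" by (cases w) auto
    then show "w \<in> set (bool_words (Suc n))" using Suc by (cases b) auto
  qed
qed

lemma distinct_bool_words: "distinct (bool_words n)"
  by (induction n) (auto simp: distinct_map inj_on_def)

definition ones :: "bool list \<Rightarrow> nat set" where "ones w = {p. p < length w \<and> w ! p}"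
definition weight :: "bool list \<Rightarrow> nat" where "weight w = card (ones w)"

lemma finite_ones[simp]: "finite (ones w)" unfolding ones_def by auto

lemma ones_nil[simp]: "ones [] = {}" by (simp add: ones_def)

lemma ones_Cons: "ones (b # w) = (if b then {0} else {}) \<union> Suc ` ones w"
proof (rule Set.set_eqI)
  fix x show "x \<in> ones (b # w) \<longleftrightarrow> x \<in> (if b then {0} else {}) \<union> Suc ` ones w"
    unfolding ones_def by (cases x) (auto simp: image_iff)
qed

lemma weight_Cons[simp]: "weight (b # w) = (if b then 1 else 0) + weight w"
proof -
  have "card (Suc ` ones w) = card (ones w)" by (simp add: card_image)
  moreover have "0 \<notin> Suc ` ones w" by auto
  ultimately show ?thesis unfolding weight_def ones_Cons by auto
qed

lemma ones_update: "p < length w \<Longrightarrow> ones (w[p:=b]) = (if b then insert p (ones w) else ones w - {p})"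
  by (auto simp: ones_def nth_list_update)

definition cube_basis :: "nat \<Rightarrow> (mdeg \<Rightarrow> bool list \<Rightarrow> bool) \<Rightarrow> int \<Rightarrow> mdeg \<Rightarrow> bool list list" where
  "cube_basis n P m a = filter (\<lambda>w. P a w \<and> - int (weight w) = m) (bool_words n)"

lemma set_cube_basis: "set (cube_basis n P m a) = {w. length w = n \<and> P a w \<and> - int (weight w) = m}"
  unfolding cube_basis_def using set_bool_words by auto

lemma distinct_cube_basis[simp]: "distinct (cube_basis n P m a)"
  unfolding cube_basis_def using distinct_bool_words by simp

lemma cube_basis_Suc: "cube_basis (Suc n) P m a =
     map (Cons False) (cube_basis n (\<lambda>a w. P a (False # w)) m a)
   @ map (Cons True) (cube_basis n (\<lambda>a w. P a (True # w)) (m + 1) a)"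
  unfolding cube_basis_def by (auto simp: filter_map o_def intro!: filter_cong)

lemma cube_basis_0: "cube_basis 0 P m a = (if m = 0 \<and> P a [] then [[]] else [])"
  by (simp add: cube_basis_def weight_def)

text \<open>Coefficient of the Koszul differential from w to w': nonzero exactly when w' arises from
  w by turning the zero at some position p into a one; the sign is minus (-1) to the number of
  ones of w after p.\<close>
fun cube_coeff :: "bool list \<Rightarrow> bool list \<Rightarrow> 'k::comm_ring_1" where
  "cube_coeff (b' # w') (b # w) = (if b = b' then cube_coeff w' w
      else if \<not> b \<and> b' \<and> w' = w then - ((-1) ^ weight w) else 0)"
| "cube_coeff _ _ = 0"

definition mat_of :: "('a \<Rightarrow> 'a \<Rightarrow> 'k) \<Rightarrow> 'a list \<Rightarrow> 'a list \<Rightarrow> 'k mat" where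
  "mat_of g R C = mat (length R) (length C) (\<lambda>(r,s). g (R!r) (C!s))"

text \<open>Kronecker delta; mat_of kdelta is the matrix of "identity on common basis elements".\<close>
definition kdelta :: "'a \<Rightarrow> 'a \<Rightarrow> 'k::zero_neq_one" where "kdelta x y = (if x = y then 1 else 0)"

definition cube_cx :: "nat \<Rightarrow> (mdeg \<Rightarrow> bool list \<Rightarrow> bool) \<Rightarrow> 'k::comm_ring_1 gcx" where
  "cube_cx n P = \<lparr> gdim = (\<lambda>m a. length (cube_basis n P m a)),
    gdif = (\<lambda>m a. mat_of cube_coeff (cube_basis n P (m - 1) a) (cube_basis n P m a)),
    gx = (\<lambda>m a. mat_of kdelta (cube_basis n P m (mv 1 a 1)) (cube_basis n P m a)),
    gy = (\<lambda>m a. mat_of kdelta (cube_basis n P m (mv 2 a 1)) (cube_basis n P m a)) \<rparr>"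

lemma cube_cx_simps[simp]:
  "gdim (cube_cx n P) m a = length (cube_basis n P m a)"
  "gdif (cube_cx n P) m a = mat_of cube_coeff (cube_basis n P (m - 1) a) (cube_basis n P m a)"
  "gx (cube_cx n P) m a = mat_of kdelta (cube_basis n P m (mv 1 a 1)) (cube_basis n P m a)"
  "gy (cube_cx n P) m a = mat_of kdelta (cube_basis n P m (mv 2 a 1)) (cube_basis n P m a)"
  by (simp_all add: cube_cx_def)

lemma cube_cx_cong:
  assumes "\<And>a w. length w = n \<Longrightarrow> P a w = Q a w"
  shows "cube_cx n P = cube_cx n Q"
proof -
  have "cube_basis n P m a = cube_basis n Q m a" for m a
  proof -
    have "\<And>w. w \<in> set (bool_words n) \<Longrightarrow> (P a w \<and> - int (weight w) = m) = (Q a w \<and> - int (weight w) = m)"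
      using assms by (simp add: set_bool_words)
    then show ?thesis unfolding cube_basis_def by (rule filter_cong[OF refl])
  qed
  then show ?thesis by (simp add: cube_cx_def)
qed

lemma mat_of_dims[simp]: "dim_row (mat_of g R C) = length R" "dim_col (mat_of g R C) = length C"
  by (simp_all add: mat_of_def)

lemma mat_of_index[simp]: "r < length R \<Longrightarrow> s < length C \<Longrightarrow> mat_of g R C $$ (r,s) = g (R!r) (C!s)"
  by (simp add: mat_of_def)

lemma mat_of_append: "mat_of g (R1 @ R2) (C1 @ C2) =
    four_block_mat (mat_of g R1 C1) (mat_of g R1 C2) (mat_of g R2 C1) (mat_of g R2 C2)"
  by (rule eq_matI) (auto simp: index_mat_four_block nth_append)

lemma mat_of_map: "mat_of g (map f R) (map h C) = mat_of (\<lambda>x y. g (f x) (h y)) R C"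
  by (rule eq_matI) auto

lemma mat_of_zero: "(\<And>x y. g x y = 0) \<Longrightarrow> mat_of g R C = 0\<^sub>m (length R) (length C)"
  by (rule eq_matI) auto

lemma mat_of_nil: "mat_of g R [] = 0\<^sub>m (length R) 0"
  by (auto intro!: eq_matI)

lemma mat_of_delta_id: "distinct L \<Longrightarrow> mat_of kdelta L L = 1\<^sub>m (length L)"
  by (rule eq_matI) (auto simp: kdelta_def nth_eq_iff_index_eq)

lemma sum_nth_distinct:
  assumes "distinct L" shows "(\<Sum>i = 0..<length L. f (L!i)) = (\<Sum>x\<in>set L. f x)"
proof -
  have "(\<Sum>i = 0..<length L. f (L!i)) = sum_list (map f L)" by (simp add: sum_list_sum_nth)
  also have "\<dots> = (\<Sum>x\<in>set L. f x)" using assms by (simp add: sum_list_distinct_conv_sum_set)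
  finally show ?thesis .
qed

lemma mat_of_delta_mult:
  assumes "distinct B" and "\<And>x. x \<in> set A \<Longrightarrow> x \<in> set C \<Longrightarrow> x \<in> set B"
  shows "mat_of kdelta A B * mat_of kdelta B C = (mat_of kdelta A C :: 'k::comm_ring_1 mat)"
proof (rule eq_matI)
  fix i j assume i: "i < dim_row (mat_of kdelta A C :: 'k mat)" and j: "j < dim_col (mat_of kdelta A C :: 'k mat)"
  have "(mat_of kdelta A B * mat_of kdelta B C) $$ (i, j)
      = (\<Sum>b\<in>set B. kdelta (A!i) b * kdelta b (C!j) :: 'k)"
    using i j sum_nth_distinct[OF assms(1)] by (simp add: scalar_prod_def row_def col_def)
  also have "\<dots> = (\<Sum>b\<in>set B. if b = A!i then kdelta (A!i) (C!j) else 0 :: 'k)"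
    by (rule sum.cong) (auto simp: kdelta_def)
  also have "\<dots> = (mat_of kdelta A C :: 'k mat) $$ (i, j)"
    using assms(2)[of "A!i"] i j by (auto simp: kdelta_def)
  finally show "(mat_of kdelta A B * mat_of kdelta B C) $$ (i, j) = (mat_of kdelta A C :: 'k mat) $$ (i, j)" .
qed auto

lemma mv_mv: "mv j (mv j a x) y = mv j a (x + y)"
  by (simp add: mv_def)
lemma mv_0[simp]: "mv j a 0 = a"
  by (simp add: mv_def)
lemma mv_comm: "mv i (mv j a x) y = mv j (mv i a y) x"
  by (simp add: mv_def)

lemma gcx_eqI:
  assumes "gdim C = gdim D" "gdif C = gdif D"
    and "\<And>m a. gact C 1 m a = gact D 1 m a" "\<And>m a. gact C 2 m a = gact D 2 m a"
  shows "C = D"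
proof (rule gcx.equality)
  show "gx C = gx D" using assms(3) by (simp add: gact_def fun_eq_iff)
  show "gy C = gy D" using assms(4) by (simp add: gact_def fun_eq_iff)
qed (simp_all add: assms)

lemma twist_cube: "twist (cube_cx n P) j c = cube_cx n (\<lambda>a. P (mv j a c))"
  by (auto simp: twist_def cube_cx_def cube_basis_def mv_comm intro!: gcx.equality)

lemma gact_cube: "gact (cube_cx n P) i m a = mat_of kdelta (cube_basis n P m (mv i a 1)) (cube_basis n P m a)"
  by (auto simp: gact_def mv_def)

text \<open>P is convex in direction j if P a w and P (a + s e_j) w imply P (a + i e_j) w for i \<le> s;
  then multiplication by x_j^s is again the identity on common basis words.\<close>
definition convex_dir :: "nat \<Rightarrow> (mdeg \<Rightarrow> bool list \<Rightarrow> bool) \<Rightarrow> bool" where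
  "convex_dir j P \<longleftrightarrow> (\<forall>a w s i. P a w \<longrightarrow> P (mv j a (int s)) w \<longrightarrow> i \<le> s \<longrightarrow> P (mv j a (int i)) w)"

lemma convex_shift: "convex_dir j P \<Longrightarrow> convex_dir j (\<lambda>a. P (mv j a c))"
  unfolding convex_dir_def by (metis mv_comm)

lemma gactpow_cube:
  assumes "convex_dir j P"
  shows "gactpow (cube_cx n P :: 'k::comm_ring_1 gcx) j s m a = mat_of kdelta (cube_basis n P m (mv j a (int s))) (cube_basis n P m a)"
proof (induction s)
  case 0 then show ?case by (simp add: mat_of_delta_id)
next
  case (Suc s)
  have "gactpow (cube_cx n P :: 'k gcx) j (Suc s) m a =
     mat_of kdelta (cube_basis n P m (mv j a (int (Suc s)))) (cube_basis n P m (mv j a (int s)))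
     * mat_of kdelta (cube_basis n P m (mv j a (int s))) (cube_basis n P m a)"
    using Suc by (simp add: gact_cube mv_mv add.commute)
  also have "\<dots> = mat_of kdelta (cube_basis n P m (mv j a (int (Suc s)))) (cube_basis n P m a)"
  proof (rule mat_of_delta_mult)
    fix x assume "x \<in> set (cube_basis n P m (mv j a (int (Suc s))))" "x \<in> set (cube_basis n P m a)"
    then show "x \<in> set (cube_basis n P m (mv j a (int s)))"
      using assms unfolding convex_dir_def set_cube_basis by (metis (mono_tags, lifting) le_add2 mem_Collect_eq plus_1_eq_Suc)
  qed simp
  finally show ?case .
qed

section \<open>N^{e_j}_t maps cube complexes to cube complexes\<close>

text \<open>Hom_S(x_j^s S \<hookrightarrow> S, C) has basis (u,0) and (0,v): in cube language, a word of length n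
  gets a new first letter, 0 for the summand C_a and 1 for the summand C_{a + s e_j} in one
  homological degree higher.\<close>
definition cone_pred :: "nat \<Rightarrow> nat \<Rightarrow> (mdeg \<Rightarrow> bool list \<Rightarrow> bool) \<Rightarrow> mdeg \<Rightarrow> bool list \<Rightarrow> bool" where
  "cone_pred j s Q a w = (case w of [] \<Rightarrow> False | b # x \<Rightarrow> if b then Q (mv j a (int s)) x else Q a x)"

lemma cube_basis_cone: "cube_basis (Suc n) (cone_pred j s Q) m a =
   map (Cons False) (cube_basis n Q m a) @ map (Cons True) (cube_basis n Q (m+1) (mv j a (int s)))"
  by (simp add: cube_basis_Suc cone_pred_def) (simp add: cube_basis_def)

lemma mat_of_coeff_same: "mat_of cube_coeff (map (Cons b) U) (map (Cons b) V) = (mat_of cube_coeff U V :: 'k::comm_ring_1 mat)"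
  by (simp add: mat_of_map)

lemma mat_of_coeff_False_True: "mat_of cube_coeff (map (Cons False) U) (map (Cons True) V) = (0\<^sub>m (length U) (length V) :: 'k::comm_ring_1 mat)"
  by (simp add: mat_of_map mat_of_zero)

lemma mat_of_coeff_True_False:
  assumes "\<forall>y\<in>set U. - int (weight y) = m"
  shows "mat_of cube_coeff (map (Cons True) V) (map (Cons False) U) =
    (if even m then - mat_of kdelta V U else (mat_of kdelta V U :: 'k::comm_ring_1 mat))"
proof (rule eq_matI)
  fix i j assume "i < dim_row (if even m then - mat_of kdelta V U else (mat_of kdelta V U :: 'k mat))"
    and "j < dim_col (if even m then - mat_of kdelta V U else (mat_of kdelta V U :: 'k mat))"
  then have i: "i < length V" and j: "j < length U" by (auto split: if_splits)
  have "even m \<longleftrightarrow> even (weight (U!j))" using assms j by (metis nth_mem even_minus even_of_nat)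
  then show "mat_of cube_coeff (map (Cons True) V) (map (Cons False) U) $$ (i, j) =
    (if even m then - mat_of kdelta V U else (mat_of kdelta V U :: 'k mat)) $$ (i, j)"
    using i j by (auto simp: kdelta_def)
qed auto

lemma mat_of_delta_same: "mat_of kdelta (map (Cons b) U) (map (Cons b) V) = (mat_of kdelta U V :: 'k::zero_neq_one mat)"
proof -
  have "(\<lambda>x y. kdelta (b#x) (b#y) :: 'k) = kdelta" by (auto simp: kdelta_def fun_eq_iff)
  then show ?thesis by (simp add: mat_of_map)
qed

lemma mat_of_delta_other: "b \<noteq> c \<Longrightarrow> mat_of kdelta (map (Cons b) U) (map (Cons c) V) = (0\<^sub>m (length U) (length V) :: 'k::zero_neq_one mat)"
  by (simp add: mat_of_map mat_of_zero kdelta_def)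

lemma gact_homP_cube:
  assumes "i = 1 \<or> i = 2"
  shows "gact (homP (cube_cx n Q :: 'k::comm_ring_1 gcx) j s) i m a = gact (cube_cx (Suc n) (cone_pred j s Q) :: 'k gcx) i m a"
proof -
  have e: "\<And>i. mv j (mv i a 1) (int s) = mv i (mv j a (int s)) 1" by (simp add: mv_comm)
  from assms show ?thesis
    by (auto simp: homP_def Let_def gact_def cube_basis_cone mat_of_append mat_of_delta_same mat_of_delta_other e)
qed

lemma homP_cube:
  assumes cv: "convex_dir j Q"
  shows "homP (cube_cx n Q :: 'k::comm_ring_1 gcx) j s = cube_cx (Suc n) (cone_pred j s Q)"
proof (rule gcx_eqI)
  show "gdim (homP (cube_cx n Q :: 'k gcx) j s) = gdim (cube_cx (Suc n) (cone_pred j s Q) :: 'k gcx)"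
    by (rule ext, rule ext) (simp add: homP_def Let_def cube_basis_cone)
  show "gdif (homP (cube_cx n Q :: 'k gcx) j s) = gdif (cube_cx (Suc n) (cone_pred j s Q) :: 'k gcx)"
  proof (rule ext, rule ext)
    fix m a
    let ?B = "\<lambda>m a. cube_basis n Q m a" and ?b = "mv j a (int s)"
    have deg: "\<forall>y\<in>set (?B m a). - int (weight y) = m" by (simp add: set_cube_basis)
    have "gdif (cube_cx (Suc n) (cone_pred j s Q) :: 'k gcx) m a =
      mat_of cube_coeff (map (Cons False) (?B (m - 1) a) @ map (Cons True) (?B m ?b))
               (map (Cons False) (?B m a) @ map (Cons True) (?B (m+1) ?b))"
      by (simp add: cube_basis_cone)
    also have "\<dots> = four_block_mat (mat_of cube_coeff (?B (m - 1) a) (?B m a))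
        (0\<^sub>m (length (?B (m - 1) a)) (length (?B (m+1) ?b)))
        (if even m then - mat_of kdelta (?B m ?b) (?B m a) else mat_of kdelta (?B m ?b) (?B m a))
        (mat_of cube_coeff (?B m ?b) (?B (m+1) ?b))"
      by (simp only: mat_of_append mat_of_coeff_same mat_of_coeff_False_True mat_of_coeff_True_False[OF deg])
    also have "\<dots> = gdif (homP (cube_cx n Q :: 'k gcx) j s) m a"
      by (simp add: homP_def Let_def gactpow_cube[OF cv])
    finally show "gdif (homP (cube_cx n Q :: 'k gcx) j s) m a = gdif (cube_cx (Suc n) (cone_pred j s Q) :: 'k gcx) m a" by simp
  qed
qed (simp_all add: gact_homP_cube)

lemma ptrunc_mv_ge: "acomp a i \<ge> int (tcomp t i) \<Longrightarrow> ptrunc t (mv i a 1) = ptrunc t a"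
  by (auto simp: ptrunc_def mv_def acomp_def tcomp_def split: if_splits)
lemma ptrunc_mv_lt: "acomp a i < int (tcomp t i) \<Longrightarrow> ptrunc t (mv i a 1) = mv i (ptrunc t a) 1"
  by (auto simp: ptrunc_def mv_def acomp_def tcomp_def split: if_splits)
lemma nonneg_mv: "nonneg a \<Longrightarrow> nonneg (mv i a 1)"
  by (auto simp: nonneg_def mv_def)

definition pull_pred :: "nat \<times> nat \<Rightarrow> (mdeg \<Rightarrow> bool list \<Rightarrow> bool) \<Rightarrow> mdeg \<Rightarrow> bool list \<Rightarrow> bool" where
  "pull_pred t R a w \<longleftrightarrow> nonneg a \<and> R (ptrunc t a) w"

lemma cube_basis_pull: "cube_basis n (pull_pred t R) m a = (if nonneg a then cube_basis n R m (ptrunc t a) else [])"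
  by (simp add: cube_basis_def pull_pred_def)

lemma gact_pull_cube:
  assumes i: "i = 1 \<or> i = 2"
  shows "gact (pull t (cube_cx n R :: 'k::comm_ring_1 gcx)) i m a = gact (cube_cx n (pull_pred t R) :: 'k gcx) i m a"
proof (cases "nonneg a")
  case True
  then have "nonneg (mv i a 1)" by (rule nonneg_mv)
  with True i show ?thesis
    by (cases "acomp a i \<ge> int (tcomp t i)")
       (auto simp: pull_def Let_def gact_def cube_basis_pull ptrunc_mv_ge ptrunc_mv_lt mat_of_delta_id)
next
  case False
  then show ?thesis by (simp add: pull_def Let_def gact_def cube_basis_pull mat_of_nil)
qed

lemma pull_cube: "pull t (cube_cx n R :: 'k::comm_ring_1 gcx) = cube_cx n (pull_pred t R)"
proof (rule gcx_eqI)
  show "gdim (pull t (cube_cx n R :: 'k gcx)) = gdim (cube_cx n (pull_pred t R) :: 'k gcx)"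
    by (rule ext, rule ext) (simp add: pull_def Let_def cube_basis_pull)
  show "gdif (pull t (cube_cx n R :: 'k gcx)) = gdif (cube_cx n (pull_pred t R) :: 'k gcx)"
    by (rule ext, rule ext) (simp add: pull_def Let_def cube_basis_pull mat_of_nil)
qed (simp_all add: gact_pull_cube)

lemma nak1_cube: "convex_dir j P \<Longrightarrow> nak1 t j (cube_cx n P :: 'k::comm_ring_1 gcx) =
  cube_cx (Suc n) (pull_pred t (cone_pred j (tcomp t j + 1) (\<lambda>b. P (mv j b (-1)))))"
  unfolding nak1_def twist_cube by (simp add: homP_cube convex_shift pull_cube)

section \<open>The closed form of N^k_t(S/I)\<close>

lemma in_quot_down:
  assumes E: "monomial_ideal_exps E" and q: "in_quot E q"
    and "0 \<le> fst r" "0 \<le> snd r" "fst r \<le> fst q" "snd r \<le> snd q"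
  shows "in_quot E r"
proof -
  have "(nat (fst r), nat (snd r)) \<notin> E"
  proof
    assume "(nat (fst r), nat (snd r)) \<in> E"
    moreover have "le2 (nat (fst r), nat (snd r)) (nat (fst q), nat (snd q))"
      using assms by (auto simp: le2_def)
    ultimately have "(nat (fst q), nat (snd q)) \<in> E" using E by (auto simp: monomial_ideal_exps_def)
    then show False using q by (simp add: in_quot_def)
  qed
  then show ?thesis using assms by (simp add: in_quot_def)
qed

lemma in_quot_between:
  assumes E: "monomial_ideal_exps E" and p: "in_quot E p" and q: "in_quot E q"
    and "fst p \<le> fst r" "snd p \<le> snd r" "fst r \<le> fst q" "snd r \<le> snd q"
  shows "in_quot E r"
  by (rule in_quot_down[OF E q]) (use p assms(4-7) in \<open>auto simp: in_quot_def\<close>)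

lemma min_gen_below:
  assumes "b \<in> E" shows "\<exists>g\<in>min_gens E. le2 g b"
proof -
  let ?P = "\<lambda>g. g \<in> E \<and> le2 g b"
  obtain g where g: "?P g" and gm: "\<forall>y. ?P y \<longrightarrow> fst g + snd g \<le> fst y + snd y"
    using ex_has_least_nat[of ?P b "\<lambda>g. fst g + snd g"] assms by (auto simp: le2_def)
  have "g \<in> min_gens E"
    unfolding min_gens_def
  proof (intro CollectI conjI ballI impI)
    show "g \<in> E" using g by simp
    fix y assume "y \<in> E" "le2 y g"
    then have "?P y" using g by (auto simp: le2_def)
    then have "fst g + snd g \<le> fst y + snd y" using gm by blast
    then show "y = g" using \<open>le2 y g\<close> by (auto simp: le2_def prod_eq_iff)
  qed
  then show ?thesis using g by blast
qed

lemma in_quot_ptrunc: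
  assumes "pos_t_determined_ideal t E"
  shows "in_quot E a \<longleftrightarrow> nonneg a \<and> in_quot E (ptrunc t a)"
proof -
  obtain a1 a2 where a: "a = (a1, a2)" by (cases a)
  have E: "monomial_ideal_exps E" and g: "\<forall>g\<in>min_gens E. le2 g t"
    using assms by (auto simp: pos_t_determined_ideal_def)
  let ?a = "(nat a1, nat a2)" and ?p = "(nat (min a1 (int (fst t))), nat (min a2 (int (snd t))))"
  have "?a \<in> E \<longleftrightarrow> ?p \<in> E"
  proof
    assume "?a \<in> E"
    then obtain g where "g \<in> min_gens E" "le2 g ?a" using min_gen_below by blast
    moreover then have "le2 g t" using g by blast
    ultimately have "le2 g ?p" by (auto simp: le2_def)
    moreover have "g \<in> E" using \<open>g \<in> min_gens E\<close> by (simp add: min_gens_def)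
    ultimately show "?p \<in> E" using E by (auto simp: monomial_ideal_exps_def)
  next
    assume "?p \<in> E"
    moreover have "le2 ?p ?a" by (auto simp: le2_def)
    ultimately show "?a \<in> E" using E by (auto simp: monomial_ideal_exps_def)
  qed
  then show ?thesis unfolding a in_quot_def nonneg_def ptrunc_def by auto
qed

text \<open>A basis word of N^k_t(S/I) records, for each of the k_1 + k_2 one-step functors, which
  summand of the Hom complex was chosen.  Reading one block of letters in coordinate c
  (the truncated coordinate of the multidegree): a zero comes from C(-e_j) and lowers the
  coordinate by one, a one comes from x_j^{t_j+1} S and, after truncation, resets it to t_j.
  The resulting coordinate of S/I is corner, and adm_word states that no intermediate
  multidegree was negative.\<close>
definition adm_word :: "int \<Rightarrow> bool list \<Rightarrow> bool" where
  "adm_word c w = (if ones w = {} then int (length w) \<le> c else int (Min (ones w)) \<le> c)"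

definition corner :: "nat \<Rightarrow> int \<Rightarrow> bool list \<Rightarrow> int" where
  "corner tt c w = (if ones w = {} then c - int (length w) else int tt - int (length w) + 1 + int (Max (ones w)))"

text \<open>The first i letters form the x-block, the remaining ones the y-block.\<close>
definition nak_pred :: "nat \<times> nat \<Rightarrow> (nat \<times> nat) set \<Rightarrow> nat \<Rightarrow> mdeg \<Rightarrow> bool list \<Rightarrow> bool" where
  "nak_pred t E i a w = (nonneg a \<and> adm_word (fst (ptrunc t a)) (take i w) \<and> adm_word (snd (ptrunc t a)) (drop i w) \<and>
      in_quot E (corner (fst t) (fst (ptrunc t a)) (take i w), corner (snd t) (snd (ptrunc t a)) (drop i w)))"

lemma ones_True: "ones (True # x) = insert 0 (Suc ` ones x)" by (simp add: ones_Cons)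
lemma ones_False: "ones (False # x) = Suc ` ones x" by (simp add: ones_Cons)

lemma Min_Suc: "finite S \<Longrightarrow> S \<noteq> {} \<Longrightarrow> Min (Suc ` S) = Suc (Min S)"
  by (simp add: mono_Min_commute[symmetric] mono_Suc)
lemma Max_Suc: "finite S \<Longrightarrow> S \<noteq> {} \<Longrightarrow> Max (Suc ` S) = Suc (Max S)"
  by (simp add: mono_Max_commute[symmetric] mono_Suc)

lemma adm_word_True[simp]: "adm_word c (True # x) \<longleftrightarrow> 0 \<le> c"
proof -
  have "Min (insert 0 (Suc ` ones x)) = 0" by (rule Min_eqI) auto
  then show ?thesis by (simp add: adm_word_def ones_True)
qed
lemma adm_word_False[simp]: "adm_word c (False # x) \<longleftrightarrow> adm_word (c - 1) x"
  by (auto simp: adm_word_def ones_False Min_Suc)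
lemma adm_word_nil[simp]: "adm_word c [] \<longleftrightarrow> 0 \<le> c" by (simp add: adm_word_def)
lemma adm_word_nonneg: "adm_word c x \<Longrightarrow> 0 \<le> c"
  by (auto simp: adm_word_def split: if_splits)
lemma adm_word_mono: "adm_word c x \<Longrightarrow> c \<le> c' \<Longrightarrow> adm_word c' x"
  by (auto simp: adm_word_def split: if_splits)
lemma adm_word_short: "length x \<le> tt \<Longrightarrow> adm_word (int tt) x"
proof (cases "ones x = {}")
  case False
  then have "Min (ones x) \<in> ones x" by simp
  then have "Min (ones x) < length x" by (simp add: ones_def)
  then show "length x \<le> tt \<Longrightarrow> adm_word (int tt) x" using False by (simp add: adm_word_def)
qed (simp add: adm_word_def)

lemma corner_False[simp]: "corner tt c (False # x) = corner tt (c - 1) x"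
  by (auto simp: corner_def ones_False Max_Suc)
lemma corner_True[simp]: "corner tt c (True # x) = corner tt (int tt) x"
proof (cases "ones x = {}")
  case True
  then show ?thesis by (simp add: corner_def ones_True)
next
  case False
  have "Max (insert 0 (Suc ` ones x)) = Suc (Max (ones x))" using False
    by (simp add: Max_Suc Max_insert)
  then show ?thesis using False by (simp add: corner_def ones_True)
qed
lemma corner_nil[simp]: "corner tt c [] = c" by (simp add: corner_def)
lemma corner_mono: "c \<le> c' \<Longrightarrow> corner tt c x \<le> corner tt c' x"
  by (simp add: corner_def)

lemma convex_nak_pred:
  assumes E: "monomial_ideal_exps E" shows "convex_dir j (nak_pred t E i)"
  unfolding convex_dir_def
proof (intro allI impI)
  fix a w s k
  assume h1: "nak_pred t E i a w" and h2: "nak_pred t E i (mv j a (int s)) w" and k: "k \<le> s"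
  obtain a1 a2 where a: "a = (a1, a2)" by (cases a)
  let ?b = "mv j a (int k)" and ?c = "mv j a (int s)"
  have le: "fst (ptrunc t a) \<le> fst (ptrunc t ?b)" "snd (ptrunc t a) \<le> snd (ptrunc t ?b)"
    "fst (ptrunc t ?b) \<le> fst (ptrunc t ?c)" "snd (ptrunc t ?b) \<le> snd (ptrunc t ?c)"
    using k by (auto simp: a mv_def ptrunc_def)
  have "nonneg ?b" using h1 by (auto simp: a mv_def nonneg_def nak_pred_def)
  moreover have "adm_word (fst (ptrunc t ?b)) (take i w)" "adm_word (snd (ptrunc t ?b)) (drop i w)"
    using h1 le adm_word_mono unfolding nak_pred_def by blast+
  moreover have "in_quot E (corner (fst t) (fst (ptrunc t ?b)) (take i w), corner (snd t) (snd (ptrunc t ?b)) (drop i w))"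
    by (rule in_quot_between[OF E conjunct2[OF conjunct2[OF conjunct2[OF h1[unfolded nak_pred_def]]]]
          conjunct2[OF conjunct2[OF conjunct2[OF h2[unfolded nak_pred_def]]]]])
       (simp_all add: corner_mono le)
  ultimately show "nak_pred t E i ?b w" unfolding nak_pred_def by blast
qed

text \<open>One step in direction y adds a letter in front of the y-block (while the x-block is
  still empty), one step in direction x adds a letter at the end of the x-block.\<close>
lemma nak1_y_pred:
  assumes "length w = Suc n" "n \<le> snd t"
  shows "pull_pred t (cone_pred 2 (tcomp t 2 + 1) (\<lambda>b. nak_pred t E 0 (mv 2 b (-1)))) a w = nak_pred t E 0 a w"
proof -
  obtain b x where w: "w = b # x" "length x \<le> snd t" using assms by (cases w) auto
  obtain a1 a2 where a: "a = (a1, a2)" by (cases a)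
  show ?thesis
    using adm_word_short[OF w(2)]
    by (cases b) (auto simp: w a pull_pred_def cone_pred_def nak_pred_def ptrunc_def mv_def tcomp_def nonneg_def dest: adm_word_nonneg)
qed

lemma nak1_x_pred:
  assumes "i \<le> fst t" "length w = Suc n" "i \<le> n"
  shows "pull_pred t (cone_pred 1 (tcomp t 1 + 1) (\<lambda>b. nak_pred t E i (mv 1 b (-1)))) a w = nak_pred t E (Suc i) a w"
proof -
  obtain b x where w: "w = b # x" using assms by (cases w) auto
  obtain a1 a2 where a: "a = (a1, a2)" by (cases a)
  have "length (take i x) \<le> fst t" using assms by simp
  then show ?thesis
    using adm_word_short
    by (cases b) (auto simp: w a pull_pred_def cone_pred_def nak_pred_def ptrunc_def mv_def tcomp_def nonneg_def dest: adm_word_nonneg)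
qed

lemma mat_of_coeff_0: "mat_of cube_coeff (cube_basis 0 P m' b) (cube_basis 0 P m a) =
    (0\<^sub>m (length (cube_basis 0 P m' b)) (length (cube_basis 0 P m a)) :: 'k::comm_ring_1 mat)"
  by (rule eq_matI) (auto simp: cube_basis_0)

lemma mat_of_delta_0: "mat_of kdelta (cube_basis 0 P m b) (cube_basis 0 P m a) = (if m = 0 \<and> P a [] \<and> P b [] then 1\<^sub>m 1
   else (0\<^sub>m (length (cube_basis 0 P m b)) (length (cube_basis 0 P m a)) :: 'k::comm_ring_1 mat))"
proof (cases "m = 0 \<and> P a [] \<and> P b []")
  case True then show ?thesis using mat_of_delta_id[of "[[]]"] by (simp add: cube_basis_0)
next
  case False
  then have "cube_basis 0 P m b = [] \<or> cube_basis 0 P m a = []" by (auto simp: cube_basis_0)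
  then show ?thesis using False by (auto intro!: eq_matI)
qed

lemma quot_cube:
  assumes "pos_t_determined_ideal t E"
  shows "quot_cx E = (cube_cx 0 (nak_pred t E 0) :: 'k::comm_ring_1 gcx)"
proof -
  have P: "nak_pred t E 0 a [] = in_quot E a" for a
    unfolding in_quot_ptrunc[OF assms, of a] nak_pred_def by (auto simp: in_quot_def)
  have len: "length (cube_basis 0 (nak_pred t E 0) m a) = qdim E m a" for m a
    by (simp add: cube_basis_0 P qdim_def)
  show ?thesis
  proof (rule gcx.equality)
    show "gdim (quot_cx E :: 'k gcx) = gdim (cube_cx 0 (nak_pred t E 0) :: 'k gcx)"
      by (rule ext, rule ext) (simp add: quot_cx_def len)
    show "gdif (quot_cx E :: 'k gcx) = gdif (cube_cx 0 (nak_pred t E 0) :: 'k gcx)"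
      by (rule ext, rule ext) (simp only: quot_cx_def gcx.simps cube_cx_simps mat_of_coeff_0 len)
    show "gx (quot_cx E :: 'k gcx) = gx (cube_cx 0 (nak_pred t E 0) :: 'k gcx)"
      by (rule ext, rule ext) (simp only: quot_cx_def gcx.simps cube_cx_simps mat_of_delta_0 len P qact_def)
    show "gy (quot_cx E :: 'k gcx) = gy (cube_cx 0 (nak_pred t E 0) :: 'k gcx)"
      by (rule ext, rule ext) (simp only: quot_cx_def gcx.simps cube_cx_simps mat_of_delta_0 len P qact_def)
  qed (simp add: quot_cx_def cube_cx_def)
qed

lemma nak1_y_iter:
  assumes "pos_t_determined_ideal t E" "j \<le> Suc (snd t)"
  shows "((nak1 t 2)^^j) (quot_cx E) = (cube_cx j (nak_pred t E 0) :: 'k::comm_ring_1 gcx)"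
  using assms(2)
proof (induction j)
  case 0 then show ?case using quot_cube[OF assms(1)] by simp
next
  case (Suc j)
  have E: "monomial_ideal_exps E" using assms(1) by (simp add: pos_t_determined_ideal_def)
  have "((nak1 t 2)^^Suc j) (quot_cx E) = nak1 t 2 (cube_cx j (nak_pred t E 0) :: 'k gcx)" using Suc by simp
  also have "\<dots> = cube_cx (Suc j) (nak_pred t E 0)"
    unfolding nak1_cube[OF convex_nak_pred[OF E]]
    by (rule cube_cx_cong) (rule nak1_y_pred, use Suc in auto)
  finally show ?case .
qed

lemma nak1_x_iter:
  assumes "monomial_ideal_exps E" "i \<le> Suc (fst t)"
  shows "((nak1 t 1)^^i) (cube_cx j (nak_pred t E 0)) = (cube_cx (i + j) (nak_pred t E i) :: 'k::comm_ring_1 gcx)"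
  using assms(2)
proof (induction i)
  case 0 then show ?case by simp
next
  case (Suc i)
  have "((nak1 t 1)^^Suc i) (cube_cx j (nak_pred t E 0)) = nak1 t 1 (cube_cx (i + j) (nak_pred t E i) :: 'k gcx)"
    using Suc by simp
  also have "\<dots> = cube_cx (Suc i + j) (nak_pred t E (Suc i))"
    unfolding nak1_cube[OF convex_nak_pred[OF assms(1)]] add_Suc
    by (rule cube_cx_cong) (rule nak1_x_pred[where n="i+j"], use Suc in auto)
  finally show ?case .
qed

lemma nak_quot_cube:
  assumes "pos_t_determined_ideal t E" "fst k \<le> Suc (fst t)" "snd k \<le> Suc (snd t)"
  shows "nak t k (quot_cx E) = (cube_cx (fst k + snd k) (nak_pred t E (fst k)) :: 'k::comm_ring_1 gcx)"
proof -
  have E: "monomial_ideal_exps E" using assms(1) by (simp add: pos_t_determined_ideal_def)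
  have "nak t k (quot_cx E) = ((nak1 t 1)^^(fst k)) (cube_cx (snd k) (nak_pred t E 0) :: 'k gcx)"
    unfolding nak_def nak1_y_iter[OF assms(1,3)] ..
  also have "\<dots> = cube_cx (fst k + snd k) (nak_pred t E (fst k))" by (rule nak1_x_iter[OF E assms(2)])
  finally show ?thesis .
qed

section \<open>Homology of cube complexes\<close>

definition exact_at :: "('a \<Rightarrow> 'a \<Rightarrow> 'k::comm_ring_1) \<Rightarrow> 'a list \<Rightarrow> 'a list \<Rightarrow> 'a list \<Rightarrow> bool" where
  "exact_at d L1 L2 L3 \<longleftrightarrow> (\<forall>v \<in> carrier_vec (length L2). mat_of d L3 L2 *\<^sub>v v = 0\<^sub>v (length L3) \<longrightarrow>
      (\<exists>w \<in> carrier_vec (length L1). v = mat_of d L2 L1 *\<^sub>v w))"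

lemma subset_Collect_image_iff: "{x \<in> A. P x} \<subseteq> {f w |w. w \<in> B} \<longleftrightarrow> (\<forall>x\<in>A. P x \<longrightarrow> (\<exists>w\<in>B. x = f w))"
  by blast

lemma homology_zero_cube_iff:
  "homology_zero (cube_cx n P :: 'k::field gcx) m \<longleftrightarrow>
     (\<forall>a. exact_at (cube_coeff :: _ \<Rightarrow> _ \<Rightarrow> 'k) (cube_basis n P (m + 1) a) (cube_basis n P m a) (cube_basis n P (m - 1) a))"
  unfolding homology_zero_def exact_at_def cube_cx_simps add_diff_cancel_right' subset_Collect_image_iff ..

lemma exact_by_homotopy:
  fixes d h :: "'a \<Rightarrow> 'a \<Rightarrow> 'k::comm_ring_1"
  assumes d1: "distinct L1" and d2: "distinct L2" and d3: "distinct L3"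
    and hid: "\<And>x'' x. x'' \<in> set L2 \<Longrightarrow> x \<in> set L2 \<Longrightarrow>
       (\<Sum>y\<in>set L1. d x'' y * h y x) + (\<Sum>z\<in>set L3. h x'' z * d z x) = (if x'' = x then 1 else 0)"
  shows "exact_at d L1 L2 L3"
  unfolding exact_at_def
proof (intro ballI impI)
  fix v assume v: "v \<in> carrier_vec (length L2)" and ker: "mat_of d L3 L2 *\<^sub>v v = 0\<^sub>v (length L3)"
  define w where "w = vec (length L1) (\<lambda>r. \<Sum>s = 0..<length L2. h (L1!r) (L2!s) * v $ s)"
  have cycle: "(\<Sum>s = 0..<length L2. d (L3!q) (L2!s) * v $ s) = 0" if q: "q < length L3" for q
  proof -
    have "(mat_of d L3 L2 *\<^sub>v v) $ q = 0" using ker q by simp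
    then show ?thesis using q v by (simp add: scalar_prod_def row_def)
  qed
  have "v = mat_of d L2 L1 *\<^sub>v w"
  proof (rule eq_vecI)
    show "dim_vec v = dim_vec (mat_of d L2 L1 *\<^sub>v w)" using v by simp
    fix r assume "r < dim_vec (mat_of d L2 L1 *\<^sub>v w)"
    then have r: "r < length L2" by simp
    let ?x = "L2!r"
    have "(mat_of d L2 L1 *\<^sub>v w) $ r = (\<Sum>i = 0..<length L1. d ?x (L1!i) * (\<Sum>s = 0..<length L2. h (L1!i) (L2!s) * v $ s))"
      using r by (simp add: scalar_prod_def row_def w_def)
    also have "\<dots> = (\<Sum>s = 0..<length L2. v $ s * (\<Sum>i = 0..<length L1. d ?x (L1!i) * h (L1!i) (L2!s)))"
      by (simp add: sum_distrib_left mult_ac) (subst sum.swap, simp add: sum_distrib_left)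
    also have "\<dots> = (\<Sum>s = 0..<length L2. v $ s * ((if ?x = L2!s then 1 else 0) - (\<Sum>z\<in>set L3. h ?x z * d z (L2!s))))"
    proof (rule sum.cong[OF refl])
      fix s assume s: "s \<in> {0..<length L2}"
      have "(\<Sum>i = 0..<length L1. d ?x (L1!i) * h (L1!i) (L2!s)) = (\<Sum>y\<in>set L1. d ?x y * h y (L2!s))"
        using sum_nth_distinct[OF d1] .
      also have "\<dots> = (if ?x = L2!s then 1 else 0) - (\<Sum>z\<in>set L3. h ?x z * d z (L2!s))"
        using hid[of ?x "L2!s"] r s by (simp add: eq_diff_eq)
      finally show "v $ s * (\<Sum>i = 0..<length L1. d ?x (L1!i) * h (L1!i) (L2!s)) =
         v $ s * ((if ?x = L2!s then 1 else 0) - (\<Sum>z\<in>set L3. h ?x z * d z (L2!s)))" by simp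
    qed
    also have "\<dots> = (\<Sum>s = 0..<length L2. v $ s * (if ?x = L2!s then 1 else 0))
        - (\<Sum>s = 0..<length L2. \<Sum>q = 0..<length L3. h ?x (L3!q) * (d (L3!q) (L2!s) * v $ s))"
      by (simp add: right_diff_distrib sum_subtractf sum_nth_distinct[OF d3, symmetric] sum_distrib_left mult_ac)
    also have "(\<Sum>s = 0..<length L2. v $ s * (if ?x = L2!s then 1 else 0)) = v $ r"
    proof -
      have "(\<Sum>s = 0..<length L2. v $ s * (if ?x = L2!s then 1 else 0)) = (\<Sum>s = 0..<length L2. if s = r then v $ s else 0)"
        by (rule sum.cong) (use d2 r in \<open>auto simp: nth_eq_iff_index_eq\<close>)
      then show ?thesis using r by simp
    qed
    also have "(\<Sum>s = 0..<length L2. \<Sum>q = 0..<length L3. h ?x (L3!q) * (d (L3!q) (L2!s) * v $ s))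
        = (\<Sum>q = 0..<length L3. h ?x (L3!q) * (\<Sum>s = 0..<length L2. d (L3!q) (L2!s) * v $ s))"
      by (subst sum.swap) (simp add: sum_distrib_left)
    also have "\<dots> = 0" using cycle by simp
    finally show "v $ r = (mat_of d L2 L1 *\<^sub>v w) $ r" by simp
  qed
  moreover have "w \<in> carrier_vec (length L1)" by (simp add: w_def)
  ultimately show "\<exists>w \<in> carrier_vec (length L1). v = mat_of d L2 L1 *\<^sub>v w" by blast
qed

lemma not_exact_by_cycle:
  fixes d :: "'a \<Rightarrow> 'a \<Rightarrow> 'k::comm_ring_1"
  assumes d2: "distinct L2" and "L2 \<noteq> []"
    and cyc: "\<And>z. z \<in> set L3 \<Longrightarrow> (\<Sum>x\<in>set L2. d z x) = 0"
  shows "\<not> exact_at d [] L2 L3"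
proof
  assume "exact_at d [] L2 L3"
  define v :: "'k vec" where "v = vec (length L2) (\<lambda>_. 1)"
  have "mat_of d L3 L2 *\<^sub>v v = 0\<^sub>v (length L3)"
  proof (rule eq_vecI)
    fix q assume "q < dim_vec (0\<^sub>v (length L3) :: 'k vec)"
    then have q: "q < length L3" by simp
    have "(mat_of d L3 L2 *\<^sub>v v) $ q = (\<Sum>s = 0..<length L2. d (L3!q) (L2!s))"
      using q by (simp add: scalar_prod_def row_def v_def)
    also have "\<dots> = 0" using sum_nth_distinct[OF d2, of "d (L3!q)"] cyc[of "L3!q"] q by simp
    finally show "(mat_of d L3 L2 *\<^sub>v v) $ q = (0\<^sub>v (length L3) :: 'k vec) $ q" using q by simp
  qed simp
  then obtain w where "w \<in> carrier_vec 0" "v = mat_of d L2 [] *\<^sub>v w"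
    using \<open>exact_at d [] L2 L3\<close> v_def unfolding exact_at_def by auto
  then have "v $ 0 = 0" using \<open>L2 \<noteq> []\<close> by (simp add: scalar_prod_def row_def)
  moreover have "v $ 0 = 1" using \<open>L2 \<noteq> []\<close> by (simp add: v_def)
  ultimately show False by simp
qed

lemma cube_coeff_nonzero:
  "cube_coeff w' w \<noteq> (0::'k::comm_ring_1) \<Longrightarrow> \<exists>p<length w. \<not> w ! p \<and> w' = w[p:=True]"
proof (induction w arbitrary: w')
  case Nil then show ?case by (cases w') auto
next
  case (Cons b x)
  then obtain b' x' where w': "w' = b' # x'" by (cases w') auto
  show ?case
  proof (cases "b = b'")
    case True
    then have "cube_coeff x' x \<noteq> (0::'k)" using Cons.prems w' by simp
    then obtain p where "p < length x" "\<not> x ! p" "x' = x[p:=True]" using Cons.IH by blast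
    then show ?thesis using True w' by (intro exI[of _ "Suc p"]) auto
  next
    case False
    then have "\<not> b \<and> b' \<and> x' = x" using Cons.prems w' by (auto split: if_splits)
    then show ?thesis using w' by (intro exI[of _ 0]) auto
  qed
qed

definition flip_sign :: "bool list \<Rightarrow> nat \<Rightarrow> 'k::comm_ring_1" where
  "flip_sign w p = - ((-1) ^ card {q \<in> ones w. p < q})"

lemma card_Suc_gt: "card {q \<in> Suc ` S. Suc p < q} = card {q \<in> S. p < q}"
proof -
  have "{q \<in> Suc ` S. Suc p < q} = Suc ` {q \<in> S. p < q}" by auto
  then show ?thesis by (simp add: card_image)
qed

lemma cube_coeff_flip:
  "p < length w \<Longrightarrow> \<not> w ! p \<Longrightarrow> cube_coeff (w[p:=True]) w = (flip_sign w p :: 'k::comm_ring_1)"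
proof (induction w arbitrary: p)
  case Nil then show ?case by simp
next
  case (Cons b x)
  show ?case
  proof (cases p)
    case 0
    have "{q \<in> Suc ` S. 0 < q} = Suc ` S" for S by auto
    with 0 Cons.prems show ?thesis by (simp add: flip_sign_def ones_Cons card_image weight_def)
  next
    case (Suc p')
    then have "cube_coeff (x[p':=True]) x = (flip_sign x p' :: 'k)" using Cons by simp
    moreover have "{q \<in> ones (b # x). Suc p' < q} = {q \<in> Suc ` ones x. Suc p' < q}" by (auto simp: ones_Cons)
    ultimately show ?thesis using Suc by (simp add: flip_sign_def card_Suc_gt)
  qed
qed

lemma flip_sign_sq: "flip_sign w p * flip_sign w p = (1::'k::comm_ring_1)"
proof -
  have "\<And>c. ((-1::'k)^c) * (-1)^c = 1" by (induct_tac c) auto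
  then show ?thesis by (simp add: flip_sign_def)
qed

lemma flip_sign_nonzero: "flip_sign w p \<noteq> (0::'k::comm_ring_1)"
  using flip_sign_sq[of w p] by (metis mult_zero_left zero_neq_one)

lemma cube_coeff_sq: "p < length w \<Longrightarrow> \<not> w ! p \<Longrightarrow> cube_coeff (w[p:=True]) w * cube_coeff (w[p:=True]) w = (1::'k::comm_ring_1)"
  by (simp add: cube_coeff_flip flip_sign_sq)

lemma cube_coeff_anticomm:
  assumes "p < l" "l < length w" "\<not> w ! p" "\<not> w ! l"
  shows "cube_coeff (w[p:=True]) w * cube_coeff (w[l:=True]) w +
     cube_coeff (w[p:=True, l:=True]) (w[p:=True]) * cube_coeff (w[l:=True, p:=True]) (w[l:=True]) = (0::'k::comm_ring_1)"
proof -
  have pl: "p < length w" using assms by simp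
  have e1: "cube_coeff (w[p:=True, l:=True]) (w[p:=True]) = (flip_sign (w[p:=True]) l :: 'k)"
    by (rule cube_coeff_flip) (use assms in auto)
  have e2: "cube_coeff (w[l:=True, p:=True]) (w[l:=True]) = (flip_sign (w[l:=True]) p :: 'k)"
    by (rule cube_coeff_flip) (use assms in auto)
  have s1: "{q \<in> ones (w[p:=True]). l < q} = {q \<in> ones w. l < q}" using assms pl by (auto simp: ones_update)
  have s2: "{q \<in> ones (w[l:=True]). p < q} = insert l {q \<in> ones w. p < q}" using assms by (auto simp: ones_update)
  have "l \<notin> {q \<in> ones w. p < q}" using assms by (simp add: ones_def)
  then have c2: "card {q \<in> ones (w[l:=True]). p < q} = Suc (card {q \<in> ones w. p < q})"
    unfolding s2 by (simp add: card_insert_if)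
  show ?thesis unfolding e1 e2 cube_coeff_flip[OF pl assms(3)] cube_coeff_flip[OF assms(2,4)]
    by (simp add: flip_sign_def s1 c2 algebra_simps)
qed

lemma cube_coeff_face:
  assumes p: "p \<in> ones z"
  shows "cube_coeff z (z[p:=False]) = (- ((-1) ^ card {q \<in> ones z. p < q}) :: 'k::comm_ring_1)"
proof -
  have pl: "p < length z" and zp: "z ! p" using p by (auto simp: ones_def)
  then have "z = (z[p:=False])[p:=True]" using list_update_id[of z p] by simp
  then have "cube_coeff z (z[p:=False]) = (flip_sign (z[p:=False]) p :: 'k)"
    using cube_coeff_flip[of p "z[p:=False]"] pl by simp
  moreover have "{q \<in> ones (z[p:=False]). p < q} = {q \<in> ones z. p < q}" using pl by (auto simp: ones_update)
  ultimately show ?thesis by (simp add: flip_sign_def)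
qed

lemma sum_cube_coeff_faces:
  assumes fin: "finite S" and len: "\<forall>x\<in>S. length x = length z"
  shows "(\<Sum>x\<in>S. cube_coeff z x) = (\<Sum>p \<in> {p \<in> ones z. z[p:=False] \<in> S}. - ((-1) ^ card {q \<in> ones z. p < q}) :: 'k::comm_ring_1)"
proof -
  let ?P = "{p \<in> ones z. z[p:=False] \<in> S}" and ?f = "\<lambda>p. z[p:=False]"
  have inj: "inj_on ?f ?P"
  proof (rule inj_onI)
    fix p p' assume p: "p \<in> ?P" and e: "z[p:=False] = z[p':=False]"
    show "p = p'"
    proof (rule ccontr)
      assume "p \<noteq> p'"
      then have "z[p':=False] ! p = True" using p by (simp add: ones_def)
      moreover have "z[p:=False] ! p = False" using p by (simp add: ones_def)
      ultimately show False using e by simp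
    qed
  qed
  have face: "cube_coeff z (z[p:=False]) = (- ((-1) ^ card {q \<in> ones z. p < q}) :: 'k)" if "p \<in> ?P" for p
    using that by (simp add: cube_coeff_face)
  have "(\<Sum>x\<in>S. cube_coeff z x) = (\<Sum>x\<in>?f ` ?P. cube_coeff z x :: 'k)"
  proof (rule sum.mono_neutral_right[OF fin])
    show "?f ` ?P \<subseteq> S" by auto
    show "\<forall>x\<in>S - ?f ` ?P. cube_coeff z x = (0::'k)"
    proof
      fix x assume x: "x \<in> S - ?f ` ?P"
      show "cube_coeff z x = (0::'k)"
      proof (rule ccontr)
        assume "cube_coeff z x \<noteq> (0::'k)"
        then obtain p where p: "p < length x" "\<not> x ! p" "z = x[p:=True]" using cube_coeff_nonzero by blast
        then have "z[p:=False] = x" using list_update_id[of x p] by simp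
        moreover have "p \<in> ones z" using p by (simp add: ones_def)
        ultimately have "x \<in> ?f ` ?P" using x by force
        then show False using x by blast
      qed
    qed
  qed
  also have "\<dots> = (\<Sum>p\<in>?P. - ((-1) ^ card {q \<in> ones z. p < q}))"
    by (simp add: sum.reindex[OF inj] face)
  finally show ?thesis .
qed

lemma flip_sign_pair_cancel:
  assumes T: "finite T" "P \<subseteq> T" and P: "card P = 2"
    and between: "\<And>q. q \<in> T - P \<Longrightarrow> q < Min P \<or> Max P < q"
  shows "(\<Sum>p\<in>P. - ((-1) ^ card {q \<in> T. p < q})) = (0::'k::comm_ring_1)"
proof -
  obtain a b where ab: "P = {a, b}" "a \<noteq> b" using P by (auto simp: card_2_iff)
  define p1 p2 where "p1 = min a b" and "p2 = max a b"
  have P12: "P = {p1, p2}" "p1 < p2" using ab by (auto simp: p1_def p2_def min_def max_def)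
  have mm: "Min P = p1" "Max P = p2" using P12 by auto
  have "{q \<in> T. p1 < q} = insert p2 {q \<in> T. p2 < q}"
  proof (intro Set.set_eqI iffI)
    fix q assume q: "q \<in> {q \<in> T. p1 < q}"
    show "q \<in> insert p2 {q \<in> T. p2 < q}"
    proof (cases "q \<in> P")
      case True then show ?thesis using q P12 by auto
    next
      case False then show ?thesis using q between[of q] mm by auto
    qed
  qed (use T P12 in auto)
  moreover have "p2 \<notin> {q \<in> T. p2 < q}" by simp
  ultimately have "card {q \<in> T. p1 < q} = Suc (card {q \<in> T. p2 < q})" using T(1) by simp
  then show ?thesis using P12 by simp
qed

text \<open>The homotopy that removes the one at the pivot position l x of a word x (with the sign of
  the corresponding face, which is its own inverse).\<close>
definition homotopy_coeff :: "(bool list \<Rightarrow> nat) \<Rightarrow> bool list \<Rightarrow> bool list \<Rightarrow> 'k::comm_ring_1" where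
  "homotopy_coeff l y x = (if x ! l x \<and> y = x[l x := False] then cube_coeff x y else 0)"

lemma sum_single:
  "finite S \<Longrightarrow> (\<And>y. y \<in> S \<Longrightarrow> f y = (if y = y0 then c else 0)) \<Longrightarrow> sum f S = (if y0 \<in> S then c else (0::'k::comm_ring_1))"
  by (simp add: sum.delta[symmetric] cong: sum.cong)

text \<open>Sets S1, S2, S3 of words with one, two and three ones (in the application), and a pivot
  function l such that toggling the pivot moves between them and such that the pivot only
  depends on any one of the ones.  Then the pivot homotopy contracts the complex at S2.\<close>
locale pivot_matching =
  fixes S1 S2 S3 :: "bool list set" and n :: nat and l :: "bool list \<Rightarrow> nat"
  assumes finite: "finite S1" "finite S3"
    and length: "\<And>x. x \<in> S1 \<union> S2 \<union> S3 \<Longrightarrow> length x = n"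
    and ones_S1: "\<And>y. y \<in> S1 \<Longrightarrow> ones y \<noteq> {}"
    and ones_S2: "\<And>x. x \<in> S2 \<Longrightarrow> ones x \<noteq> {}"
    and pivot_bound: "\<And>x. x \<in> S2 \<union> S3 \<Longrightarrow> l x < n"
    and pivot_remove: "\<And>x. x \<in> S2 \<Longrightarrow> x ! l x \<Longrightarrow> x[l x := False] \<in> S1"
    and pivot_add: "\<And>x. x \<in> S2 \<Longrightarrow> \<not> x ! l x \<Longrightarrow> x[l x := True] \<in> S3"
    and pivot_exchange: "\<And>x p. x \<in> S2 \<Longrightarrow> x ! l x \<Longrightarrow> p < n \<Longrightarrow> \<not> x ! p \<Longrightarrow> p \<noteq> l x \<Longrightarrow>
              x[l x := False, p := True] \<in> S2 \<Longrightarrow> p < l x \<and> x[p := True] \<in> S3"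
    and pivot_local: "\<And>u v. u \<in> S1 \<union> S2 \<union> S3 \<Longrightarrow> v \<in> S1 \<union> S2 \<union> S3 \<Longrightarrow> ones u \<inter> ones v \<noteq> {} \<Longrightarrow> l u = l v"
begin

lemma pivot_length: "x \<in> S2 \<union> S3 \<Longrightarrow> l x < length x"
  using pivot_bound length by auto

lemma sum_down:
  assumes x: "x \<in> S2"
  shows "(\<Sum>y\<in>S1. cube_coeff x'' y * homotopy_coeff l y x) =
    (if x ! l x then cube_coeff x'' (x[l x := False]) * cube_coeff x (x[l x := False]) else (0::'k::comm_ring_1))"
proof -
  have "(\<Sum>y\<in>S1. cube_coeff x'' y * homotopy_coeff l y x) =
    (if x[l x := False] \<in> S1 then (if x ! l x then cube_coeff x'' (x[l x := False]) * cube_coeff x (x[l x := False]) else 0) else (0::'k))"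
    by (rule sum_single[OF finite(1)]) (auto simp: homotopy_coeff_def)
  then show ?thesis using pivot_remove[OF x] by auto
qed

text \<open>The term d h: the only word of S3 whose pivot removal gives x'' is x'' plus its pivot.\<close>
lemma sum_up:
  assumes x'': "x'' \<in> S2"
  defines "z0 \<equiv> x''[l x'' := True]"
  shows "(\<Sum>z\<in>S3. homotopy_coeff l x'' z * cube_coeff z x) =
    (if \<not> x'' ! l x'' then cube_coeff z0 x'' * cube_coeff z0 x else (0::'k::comm_ring_1))"
proof -
  have lx'': "l x'' < length x''" using pivot_length x'' by blast
  have pivot_z: "l z = l x''" if z: "z \<in> S3" and sub: "ones x'' \<subseteq> ones z" for z
    using pivot_local[of z x''] z x'' sub ones_S2[OF x''] by blast
  have "(\<Sum>z\<in>S3. homotopy_coeff l x'' z * cube_coeff z x) =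
    (if z0 \<in> S3 then (if \<not> x'' ! l x'' then cube_coeff z0 x'' * cube_coeff z0 x else 0) else (0::'k))"
  proof (rule sum_single[OF finite(2)])
    fix z assume z: "z \<in> S3"
    have lz: "l z < length z" using pivot_length z by blast
    show "homotopy_coeff l x'' z * cube_coeff z x =
        (if z = z0 then (if \<not> x'' ! l x'' then cube_coeff z0 x'' * cube_coeff z0 x else 0) else (0::'k))"
    proof (cases "z ! l z \<and> x'' = z[l z := False]")
      case True
      then have "ones x'' \<subseteq> ones z" using lz by (auto simp: ones_update)
      then have l: "l z = l x''" using pivot_z z by blast
      then have "z = z0" using True lz unfolding z0_def by (metis list_update_id list_update_overwrite)
      moreover have "\<not> x'' ! l x''" using True l lz by (metis nth_list_update_eq)
      ultimately show ?thesis using True by (simp add: homotopy_coeff_def)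
    next
      case False
      have "z \<noteq> z0 \<or> x'' ! l x''"
      proof (rule ccontr)
        assume "\<not> (z \<noteq> z0 \<or> x'' ! l x'')"
        then have zz: "z = z0" and nx: "\<not> x'' ! l x''" by auto
        then have "ones x'' \<subseteq> ones z" using lx'' by (auto simp: z0_def ones_update)
        then have l: "l z = l x''" using pivot_z z by blast
        then have "z ! l z" using zz lx'' by (simp add: z0_def)
        moreover have "x'' = z[l z := False]" using zz nx l list_update_id[of x'' "l x''"] by (simp add: z0_def)
        ultimately show False using False by blast
      qed
      moreover have "homotopy_coeff l x'' z = (0::'k)" using False unfolding homotopy_coeff_def by (simp only: if_False)
      ultimately show ?thesis by auto
    qed
  qed
  then show ?thesis using pivot_add[OF x''] by (auto simp: z0_def)
qed

lemma up_face_cases: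
  assumes x: "x \<in> S2" and x'': "x'' \<in> S2" and nx'': "\<not> x'' ! l x''"
    and nz: "cube_coeff (x''[l x'' := True]) x \<noteq> (0::'k::comm_ring_1)"
  shows "x'' = x \<or> (x ! l x \<and> cube_coeff x'' (x[l x := False]) \<noteq> (0::'k))"
proof -
  let ?z = "x''[l x'' := True]"
  have lx'': "l x'' < length x''" using pivot_length x'' by blast
  obtain q where q: "q < length x" "\<not> x ! q" "?z = x[q:=True]" using cube_coeff_nonzero[OF nz] by blast
  have z3: "?z \<in> S3" using pivot_add[OF x'' nx''] .
  have "ones x'' \<subseteq> ones ?z" using lx'' by (auto simp: ones_update)
  then have a1: "l ?z = l x''" using pivot_local[of ?z x''] z3 x'' ones_S2[OF x''] by blast
  have "ones x \<subseteq> ones ?z" using q by (auto simp: ones_update)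
  then have a2: "l ?z = l x" using pivot_local[of ?z x] z3 x ones_S2[OF x] by blast
  have l: "l x'' = l x" using a1 a2 by simp
  have x''_eq: "x'' = ?z[l x := False]" using nx'' l list_update_id[of x'' "l x''"] by simp
  show ?thesis
  proof (cases "x ! l x")
    case True
    then have ql: "q \<noteq> l x" using q by auto
    have "x'' = x[l x := False, q := True]" using x''_eq q ql by (simp add: list_update_swap)
    moreover have "\<not> x[l x := False] ! q" "q < length (x[l x := False])" using q ql by simp_all
    ultimately have "cube_coeff x'' (x[l x := False]) = (flip_sign (x[l x := False]) q :: 'k)"
      by (simp add: cube_coeff_flip)
    then show ?thesis using True flip_sign_nonzero by metis
  next
    case False
    have "?z ! l x" using a1 a2 lx'' by (metis nth_list_update_eq)
    then have "q = l x" using q False by (metis nth_list_update)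
    then have "x = ?z[l x := False]" using q False list_update_id[of x "l x"] by simp
    then show ?thesis using x''_eq by simp
  qed
qed

lemma exchange_cancel:
  assumes x: "x \<in> S2" and x'': "x'' \<in> S2" and lx: "x ! l x" and ne: "x'' \<noteq> x"
    and nz: "cube_coeff x'' (x[l x := False]) \<noteq> (0::'k::comm_ring_1)"
  shows "(\<Sum>y\<in>S1. cube_coeff x'' y * homotopy_coeff l y x) + (\<Sum>z\<in>S3. homotopy_coeff l x'' z * cube_coeff z x) = (0::'k)"
proof -
  let ?y = "x[l x := False]"
  have llen: "l x < length x" using pivot_length x by blast
  have y1: "?y \<in> S1" using pivot_remove[OF x lx] .
  obtain p where p: "p < length ?y" "\<not> ?y ! p" "x'' = ?y[p:=True]" using cube_coeff_nonzero[OF nz] by blast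
  have xy: "x = ?y[l x := True]" using lx list_update_id[of x "l x"] by simp
  have pl: "p \<noteq> l x" using p ne xy by auto
  have nxp: "\<not> x ! p" using p pl by simp
  have g3: "p < l x" "x[p := True] \<in> S3"
    using pivot_exchange[OF x lx _ nxp pl] p length[of x] x x'' by auto
  have "ones ?y \<subseteq> ones x''" "ones ?y \<subseteq> ones x" using p llen by (auto simp: ones_update)
  moreover have "ones ?y \<noteq> {}" using ones_S1 y1 by blast
  ultimately have "ones x'' \<inter> ones x \<noteq> {}" by blast
  then have l: "l x'' = l x" using pivot_local[of x'' x] x x'' by blast
  have nx'': "\<not> x'' ! l x''" using l p pl llen by simp
  have z: "x''[l x'' := True] = ?y[p:=True, l x:=True]" using l p by simp
  have sw: "?y[l x:=True, p:=True] = ?y[p:=True, l x:=True]" using pl by (simp add: list_update_swap)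
  have "cube_coeff (?y[p:=True]) ?y * cube_coeff (?y[l x:=True]) ?y +
      cube_coeff (?y[p:=True, l x:=True]) (?y[p:=True]) * cube_coeff (?y[l x:=True, p:=True]) (?y[l x:=True]) = (0::'k)"
    by (rule cube_coeff_anticomm[OF g3(1)]) (use llen p in auto)
  then show ?thesis
    unfolding sum_down[OF x] sum_up[OF x''] using lx nx'' z sw p(3) xy[symmetric] by simp
qed

theorem homotopy_identity:
  assumes x'': "x'' \<in> S2" and x: "x \<in> S2"
  shows "(\<Sum>y\<in>S1. cube_coeff x'' y * homotopy_coeff l y x) + (\<Sum>z\<in>S3. homotopy_coeff l x'' z * cube_coeff z x) =
    (if x'' = x then 1 else (0::'k::comm_ring_1))"
proof -
  have lx: "l x < length x" using pivot_length x by blast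
  show ?thesis
  proof (cases "x'' = x")
    case True
    have "x ! l x \<Longrightarrow> x[l x := False, l x := True] = x" using list_update_id[of x "l x"] by simp
    then show ?thesis
      unfolding sum_down[OF x] sum_up[OF x''] using True lx cube_coeff_sq[of "l x" "x[l x := False]"]
        cube_coeff_sq[of "l x" x] by auto
  next
    case ne: False
    show ?thesis
    proof (cases "x ! l x \<and> cube_coeff x'' (x[l x := False]) \<noteq> (0::'k)")
      case True
      then show ?thesis using exchange_cancel[OF x x'' conjunct1[OF True] ne conjunct2[OF True]] ne by simp
    next
      case False
      then have "x ! l x \<longrightarrow> cube_coeff x'' (x[l x := False]) = (0::'k)" by blast
      moreover have "\<not> x'' ! l x'' \<longrightarrow> cube_coeff (x''[l x'' := True]) x = (0::'k)"
        using up_face_cases[OF x x''] ne False by blast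
      ultimately show ?thesis unfolding sum_down[OF x] sum_up[OF x''] using ne by auto
    qed
  qed
qed

end

section \<open>Homological degree -2 of N^k_t(S/I)\<close>

definition xblock :: "nat \<Rightarrow> bool list \<Rightarrow> nat set" where "xblock k1 w = ones (take k1 w)"
definition yblock :: "nat \<Rightarrow> bool list \<Rightarrow> nat set" where "yblock k1 w = ones (drop k1 w)"

lemma xblock_eq: "xblock k1 w = {p \<in> ones w. p < k1}"
  by (auto simp: xblock_def ones_def)
lemma yblock_eq: "yblock k1 w = {q. k1 + q \<in> ones w}"
  by (auto simp: yblock_def ones_def)

lemma finite_xblock[simp]: "finite (xblock k1 w)" by (simp add: xblock_def)
lemma finite_yblock[simp]: "finite (yblock k1 w)" by (simp add: yblock_def)

lemma xblock_bound: "p \<in> xblock k1 w \<Longrightarrow> p < k1" by (simp add: xblock_eq)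
lemma yblock_bound: "length w = k1 + k2 \<Longrightarrow> q \<in> yblock k1 w \<Longrightarrow> q < k2" by (auto simp: yblock_def ones_def)

lemma xblock_update: "p < length w \<Longrightarrow> xblock k1 (w[p:=b]) =
    (if p < k1 then (if b then insert p (xblock k1 w) else xblock k1 w - {p}) else xblock k1 w)"
  by (auto simp: xblock_eq ones_update)
lemma yblock_update: "p < length w \<Longrightarrow> yblock k1 (w[p:=b]) =
    (if p < k1 then yblock k1 w else (if b then insert (p - k1) (yblock k1 w) else yblock k1 w - {p - k1}))"
  by (auto simp: yblock_eq ones_update)

lemma ones_blocks: "ones w = xblock k1 w \<union> (\<lambda>q. k1 + q) ` yblock k1 w"
proof (rule Set.set_eqI)
  fix x
  show "x \<in> ones w \<longleftrightarrow> x \<in> xblock k1 w \<union> (\<lambda>q. k1 + q) ` yblock k1 w"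
  proof (cases "x < k1")
    case False
    then have e: "x = k1 + (x - k1)" by simp
    show ?thesis
    proof
      assume "x \<in> ones w" then have "x - k1 \<in> yblock k1 w" using e by (simp add: yblock_eq)
      then show "x \<in> xblock k1 w \<union> (\<lambda>q. k1 + q) ` yblock k1 w" using e by blast
    next
      assume "x \<in> xblock k1 w \<union> (\<lambda>q. k1 + q) ` yblock k1 w"
      then show "x \<in> ones w" using False by (auto simp: xblock_eq yblock_eq)
    qed
  qed (auto simp: xblock_eq yblock_eq)
qed

lemma weight_blocks: "weight w = card (xblock k1 w) + card (yblock k1 w)"
proof -
  have "xblock k1 w \<inter> (\<lambda>q. k1 + q) ` yblock k1 w = {}" by (auto simp: xblock_eq)
  then have "card (ones w) = card (xblock k1 w) + card ((\<lambda>q. k1 + q) ` yblock k1 w)"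
    by (subst ones_blocks[of w k1]) (simp add: card_Un_disjoint)
  then show ?thesis by (simp add: weight_def card_image)
qed

definition adm_set :: "int \<Rightarrow> nat \<Rightarrow> nat set \<Rightarrow> bool" where
  "adm_set c kk S = (if S = {} then int kk \<le> c else int (Min S) \<le> c)"
definition corner_set :: "nat \<Rightarrow> int \<Rightarrow> nat \<Rightarrow> nat set \<Rightarrow> int" where
  "corner_set tt c kk S = (if S = {} then c - int kk else int tt - int kk + 1 + int (Max S))"

lemma nak_pred_blocks:
  assumes "length w = k1 + k2"
  shows "nak_pred t E k1 a w \<longleftrightarrow> nonneg a \<and>
   adm_set (fst (ptrunc t a)) k1 (xblock k1 w) \<and> adm_set (snd (ptrunc t a)) k2 (yblock k1 w) \<and>
   in_quot E (corner_set (fst t) (fst (ptrunc t a)) k1 (xblock k1 w), corner_set (snd t) (snd (ptrunc t a)) k2 (yblock k1 w))"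
proof -
  have "length (take k1 w) = k1" "length (drop k1 w) = k2" using assms by simp_all
  then show ?thesis unfolding nak_pred_def adm_word_def corner_def adm_set_def corner_set_def xblock_def yblock_def by simp
qed

locale nak_window =
  fixes t :: "nat \<times> nat" and k1 k2 :: nat and E :: "(nat \<times> nat) set"
  assumes k_bounds: "1 \<le> k1" "1 \<le> k2" "k1 \<le> fst t + 1" "k2 \<le> snd t + 1"
    and monomial: "monomial_ideal_exps E"
begin

abbreviation cells :: "int \<Rightarrow> mdeg \<Rightarrow> bool list set" where
  "cells m a \<equiv> set (cube_basis (k1 + k2) (nak_pred t E k1) m a)"

lemma cells_iff: "w \<in> cells m a \<longleftrightarrow> length w = k1 + k2 \<and> nak_pred t E k1 a w \<and> - int (weight w) = m"
  by (simp add: set_cube_basis)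

abbreviation top_monomial :: mdeg where
  "top_monomial \<equiv> (int (fst t + 1 - k1), int (snd t + 1 - k2))"

lemma top_monomial_eq: "top_monomial = (int (fst t) - int k1 + 1, int (snd t) - int k2 + 1)"
  using k_bounds by auto

lemma both_blocks_top:
  assumes "length w = k1 + k2" "nak_pred t E k1 a w" "xblock k1 w \<noteq> {}" "yblock k1 w \<noteq> {}"
  shows "in_quot E top_monomial"
proof -
  have "in_quot E (int (fst t) - int k1 + 1 + int (Max (xblock k1 w)), int (snd t) - int k2 + 1 + int (Max (yblock k1 w)))"
    using assms unfolding nak_pred_blocks[OF assms(1)] by (simp add: corner_set_def)
  then show ?thesis unfolding top_monomial_eq by (rule in_quot_down[OF monomial]) (use k_bounds in auto)
qed

abbreviation corner_deg :: mdeg where "corner_deg \<equiv> (int k1 - 1, int k2 - 1)"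

lemma nak_pred_corner:
  assumes l: "length w = k1 + k2"
  shows "nak_pred t E k1 corner_deg w \<longleftrightarrow> xblock k1 w \<noteq> {} \<and> yblock k1 w \<noteq> {} \<and>
    in_quot E (int (fst t) - int k1 + 1 + int (Max (xblock k1 w)), int (snd t) - int k2 + 1 + int (Max (yblock k1 w)))"
proof -
  have pt: "ptrunc t corner_deg = corner_deg" using k_bounds by (simp add: ptrunc_def)
  have nn: "nonneg corner_deg" using k_bounds by (simp add: nonneg_def)
  have "xblock k1 w \<noteq> {} \<Longrightarrow> Min (xblock k1 w) < k1" using Min_in[OF finite_xblock] xblock_bound by blast
  then have vx: "adm_set (int k1 - 1) k1 (xblock k1 w) \<longleftrightarrow> xblock k1 w \<noteq> {}" by (auto simp: adm_set_def)
  have "yblock k1 w \<noteq> {} \<Longrightarrow> Min (yblock k1 w) < k2" using Min_in[OF finite_yblock] yblock_bound[OF l] by blast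
  then have vy: "adm_set (int k2 - 1) k2 (yblock k1 w) \<longleftrightarrow> yblock k1 w \<noteq> {}" by (auto simp: adm_set_def)
  show ?thesis unfolding nak_pred_blocks[OF l] pt using nn vx vy by (auto simp: corner_set_def)
qed

text \<open>Nothing maps into homological degree -2: a word of weight 1 cannot have ones in both blocks.\<close>
lemma corner_basis_empty: "cube_basis (k1 + k2) (nak_pred t E k1) (-1) corner_deg = []"
proof -
  have "w \<notin> cells (-1) corner_deg" for w
  proof
    assume "w \<in> cells (-1) corner_deg"
    then have w: "length w = k1 + k2" "nak_pred t E k1 corner_deg w" "weight w = 1" by (auto simp: cells_iff)
    then have "card (xblock k1 w) \<ge> 1" "card (yblock k1 w) \<ge> 1"
      using nak_pred_corner[OF w(1)] by (auto simp: Suc_le_eq card_gt_0_iff)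
    then show False using w(3) weight_blocks[of w k1] by simp
  qed
  then show ?thesis by (metis set_empty2 subsetI subset_empty)
qed

definition corner_word :: "bool list" where "corner_word = map (\<lambda>i. i = 0 \<or> i = k1) [0..<k1+k2]"

lemma corner_word_in:
  assumes "in_quot E top_monomial"
  shows "corner_word \<in> cells (-2) corner_deg"
proof -
  have l: "length corner_word = k1 + k2" by (simp add: corner_word_def)
  have o: "ones corner_word = {0, k1}" using k_bounds by (auto simp: corner_word_def ones_def)
  have "xblock k1 corner_word = {0}" "yblock k1 corner_word = {0}" using k_bounds o by (auto simp: xblock_eq yblock_eq)
  moreover have "weight corner_word = 2" using o k_bounds by (simp add: weight_def)
  ultimately show ?thesis using assms l nak_pred_corner[OF l] unfolding cells_iff top_monomial_eq by simp
qed

text \<open>Removing a one from a word of weight 3 in the corner multidegree keeps it admissible iff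
  both blocks stay nonempty (the corner can only decrease).\<close>
lemma corner_face_iff_blocks:
  assumes top: "in_quot E top_monomial" and z: "z \<in> cells (-3) corner_deg" and p: "p \<in> ones z"
  shows "z[p:=False] \<in> cells (-2) corner_deg \<longleftrightarrow> xblock k1 (z[p:=False]) \<noteq> {} \<and> yblock k1 (z[p:=False]) \<noteq> {}"
proof
  let ?y = "z[p:=False]"
  have zl: "length z = k1 + k2" and zp: "nak_pred t E k1 corner_deg z" and zc: "weight z = 3"
    using z by (auto simp: cells_iff)
  have pl: "p < length z" using p by (simp add: ones_def)
  have yl: "length ?y = k1 + k2" using zl by simp
  show "xblock k1 ?y \<noteq> {} \<and> yblock k1 ?y \<noteq> {}" if "?y \<in> cells (-2) corner_deg"
    using that nak_pred_corner[OF yl] by (auto simp: cells_iff)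
  assume ne: "xblock k1 ?y \<noteq> {} \<and> yblock k1 ?y \<noteq> {}"
  have zq: "in_quot E (int (fst t) - int k1 + 1 + int (Max (xblock k1 z)), int (snd t) - int k2 + 1 + int (Max (yblock k1 z)))"
    using nak_pred_corner[OF zl] zp by auto
  have subx: "xblock k1 ?y \<subseteq> xblock k1 z" and suby: "yblock k1 ?y \<subseteq> yblock k1 z"
    using pl by (auto simp: xblock_update yblock_update)
  have "Max (xblock k1 ?y) \<le> Max (xblock k1 z)" "Max (yblock k1 ?y) \<le> Max (yblock k1 z)"
    using Max_mono[OF subx] Max_mono[OF suby] ne by simp_all
  then have "in_quot E (int (fst t) - int k1 + 1 + int (Max (xblock k1 ?y)), int (snd t) - int k2 + 1 + int (Max (yblock k1 ?y)))"
    by (intro in_quot_between[OF monomial top zq]) (use k_bounds in auto)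
  moreover have "weight ?y = 2" using p zc pl by (simp add: weight_def ones_update)
  ultimately show "?y \<in> cells (-2) corner_deg" using nak_pred_corner[OF yl] ne yl by (simp add: cells_iff)
qed

lemma corner_face_iff:
  assumes top: "in_quot E top_monomial" and z: "z \<in> cells (-3) corner_deg" and p: "p \<in> ones z"
  shows "z[p:=False] \<in> cells (-2) corner_deg \<longleftrightarrow> (p < k1 \<longleftrightarrow> card (xblock k1 z) = 2)"
proof -
  let ?y = "z[p:=False]"
  have zl: "length z = k1 + k2" and zp: "nak_pred t E k1 corner_deg z" and zc: "weight z = 3"
    using z by (auto simp: cells_iff)
  have zx: "xblock k1 z \<noteq> {}" and zy: "yblock k1 z \<noteq> {}" using nak_pred_corner[OF zl] zp by auto
  have pl: "p < length z" using p by (simp add: ones_def)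
  note face = corner_face_iff_blocks[OF top z p]
  have cards: "card (xblock k1 z) + card (yblock k1 z) = 3" using zc weight_blocks[of z k1] by simp
  have c: "card (xblock k1 z) \<ge> 1" "card (yblock k1 z) \<ge> 1" using zx zy by (auto simp: Suc_le_eq card_gt_0_iff)
  show ?thesis
  proof (cases "p < k1")
    case True
    then have "p \<in> xblock k1 z" using p by (simp add: xblock_eq)
    then have "card (xblock k1 ?y) = card (xblock k1 z) - 1" using pl True by (simp add: xblock_update)
    moreover have "yblock k1 ?y = yblock k1 z" using pl True by (simp add: yblock_update)
    moreover have "xblock k1 ?y \<noteq> {} \<longleftrightarrow> card (xblock k1 ?y) > 0" by (simp add: card_gt_0_iff)
    ultimately show ?thesis unfolding face using True zy cards c by arith
  next
    case False
    then have "p - k1 \<in> yblock k1 z" using p by (simp add: yblock_eq)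
    then have "card (yblock k1 ?y) = card (yblock k1 z) - 1" using pl False by (simp add: yblock_update)
    moreover have "xblock k1 ?y = xblock k1 z" using pl False by (simp add: xblock_update)
    moreover have "yblock k1 ?y \<noteq> {} \<longleftrightarrow> card (yblock k1 ?y) > 0" by (simp add: card_gt_0_iff)
    ultimately show ?thesis unfolding face using False zx cards c by arith
  qed
qed

text \<open>The all-ones vector in degree -2 is a cycle: the removable faces of every z form one block
  of two adjacent ones, whose signs cancel.\<close>
lemma corner_cycle:
  assumes top: "in_quot E top_monomial" and z: "z \<in> cells (-3) corner_deg"
  shows "(\<Sum>x\<in>cells (-2) corner_deg. cube_coeff z x) = (0::'k::comm_ring_1)"
proof -
  let ?F = "{p \<in> ones z. z[p:=False] \<in> cells (-2) corner_deg}"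
  have zl: "length z = k1 + k2" and zc: "weight z = 3" using z by (auto simp: cells_iff)
  have zx: "xblock k1 z \<noteq> {}" and zy: "yblock k1 z \<noteq> {}" using nak_pred_corner[OF zl] z by (auto simp: cells_iff)
  have F: "?F = {p \<in> ones z. p < k1 \<longleftrightarrow> card (xblock k1 z) = 2}"
    using corner_face_iff[OF top z] by blast
  have cards: "card (xblock k1 z) + card (yblock k1 z) = 3" using zc weight_blocks[of z k1] by simp
  have "card ?F = 2 \<and> (\<forall>q \<in> ones z - ?F. q < Min ?F \<or> Max ?F < q)"
  proof (cases "card (xblock k1 z) = 2")
    case True
    then have FX: "?F = xblock k1 z" unfolding F xblock_eq by simp
    have "Max (xblock k1 z) < k1" using Min_in[OF finite_xblock] Max_in[OF finite_xblock zx] xblock_bound by blast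
    moreover have "k1 \<le> q" if "q \<in> ones z - xblock k1 z" for q using that by (auto simp: xblock_eq)
    ultimately show ?thesis unfolding FX using True by force
  next
    case False
    let ?Y = "(\<lambda>q. k1 + q) ` yblock k1 z"
    have "{p \<in> ones z. \<not> p < k1} = ?Y"
    proof (intro Set.set_eqI iffI)
      fix p assume "p \<in> {p \<in> ones z. \<not> p < k1}"
      then have "p - k1 \<in> yblock k1 z" "p = k1 + (p - k1)" by (auto simp: yblock_eq)
      then show "p \<in> ?Y" by blast
    qed (auto simp: yblock_eq)
    then have FY: "?F = ?Y" unfolding F using False by simp
    have "card (xblock k1 z) \<ge> 1" "card (yblock k1 z) \<ge> 1" using zx zy by (auto simp: Suc_le_eq card_gt_0_iff)
    then have "card (yblock k1 z) = 2" using False cards by arith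
    then have "card ?Y = 2" by (simp add: card_image)
    moreover have "k1 \<le> Min ?Y" using zy by simp
    moreover have "q < k1" if "q \<in> ones z - ?Y" for q using that \<open>{p \<in> ones z. \<not> p < k1} = ?Y\<close> by blast
    ultimately show ?thesis unfolding FY by force
  qed
  moreover have "?F \<subseteq> ones z" by blast
  moreover have "\<forall>x\<in>cells (-2) corner_deg. length x = length z" using zl by (auto simp: cells_iff)
  ultimately have "(\<Sum>x\<in>cells (-2) corner_deg. cube_coeff z x) = (\<Sum>p\<in>?F. - ((-1) ^ card {q \<in> ones z. p < q}) :: 'k)"
    by (intro sum_cube_coeff_faces) simp_all
  also have "\<dots> = 0" by (rule flip_sign_pair_cancel) (use \<open>card ?F = 2 \<and> _\<close> in auto)
  finally show ?thesis .
qed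

text \<open>If (S/I)_{t+1-k} \<noteq> 0, then H^2 N^k_t(S/I) \<noteq> 0, witnessed in multidegree k - 1.\<close>
theorem homology_nonzero:
  assumes top: "in_quot E top_monomial"
  shows "\<not> homology_zero (cube_cx (k1 + k2) (nak_pred t E k1) :: 'k::field gcx) (-2)"
proof -
  let ?B = "\<lambda>m. cube_basis (k1 + k2) (nak_pred t E k1) m corner_deg"
  have "\<not> exact_at (cube_coeff :: _ \<Rightarrow> _ \<Rightarrow> 'k) [] (?B (-2)) (?B (-3))"
  proof (rule not_exact_by_cycle)
    show "?B (-2) \<noteq> []" using corner_word_in[OF top] by auto
    show "\<And>z. z \<in> set (?B (-3)) \<Longrightarrow> (\<Sum>x\<in>set (?B (-2)). cube_coeff z x) = (0::'k)"
      by (rule corner_cycle[OF top])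
  qed simp
  then have "\<not> exact_at (cube_coeff :: _ \<Rightarrow> _ \<Rightarrow> 'k) (?B (-2 + 1)) (?B (-2)) (?B (-2 - 1))"
    using corner_basis_empty by simp
  then show ?thesis unfolding homology_zero_cube_iff by blast
qed

end

lemma Max_bounded_pred:
  fixes F :: "nat set"
  assumes fin: "finite F" and ne: "F \<noteq> {}" and bnd: "\<forall>x\<in>F. x < K" and q: "Q (Max F)"
  shows "Max F \<le> Max {j. j < K \<and> Q j}" "Max {j. j < K \<and> Q j} < K" "Q (Max {j. j < K \<and> Q j})"
proof -
  have mF: "Max F \<in> {j. j < K \<and> Q j}" using Max_in[OF fin ne] bnd q by auto
  have finJ: "finite {j. j < K \<and> Q j}" by simp
  have neJ: "{j. j < K \<and> Q j} \<noteq> {}" using mF by blast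
  show "Max F \<le> Max {j. j < K \<and> Q j}" using Max_ge[OF finJ mF] .
  have "Max {j. j < K \<and> Q j} \<in> {j. j < K \<and> Q j}" using Max_in[OF finJ neJ] .
  then show "Max {j. j < K \<and> Q j} < K" "Q (Max {j. j < K \<and> Q j})" by auto
qed

lemma card2_remove_max:
  fixes F :: "nat set"
  assumes "card F = 2" "J \<in> F" "Max F \<le> J"
  shows "F - {J} \<noteq> {}" "Min (F - {J}) = Min F" "Max (F - {J}) \<le> Max F"
proof -
  obtain x y where xy: "F = {x, y}" "x \<noteq> y" using assms(1) unfolding card_2_iff by blast
  have fin: "finite F" using xy by simp
  have JM: "J = Max F" using assms(2,3) Max_ge[OF fin assms(2)] by simp
  show ne: "F - {J} \<noteq> {}" using xy by auto
  show "Max (F - {J}) \<le> Max F" using Max_mono[of "F - {J}" F] ne fin by auto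
  have "Min F \<noteq> J"
  proof
    assume "Min F = J"
    then have "Min F = Max F" using JM by simp
    then show False using xy by (auto simp: min_def max_def split: if_splits)
  qed
  then have mi: "Min F \<in> F - {J}" using Min_in[OF fin] xy by auto
  show "Min (F - {J}) = Min F"
  proof (rule antisym)
    show "Min (F - {J}) \<le> Min F" using Min_le[of "F - {J}" "Min F"] mi fin by auto
    show "Min F \<le> Min (F - {J})" using Min_antimono[of "F - {J}" F] ne fin by auto
  qed
qed

lemma Max_Min_insert_big:
  fixes F :: "nat set"
  assumes "finite F" "F \<noteq> {}" "Max F \<le> J"
  shows "Max (insert J F) = J" "Min (insert J F) \<le> Min F"
  using assms by (simp_all add: Max_insert Min_insert)

locale nak_window_vanishing = nak_window +
  assumes not_top: "\<not> in_quot E (int (fst t + 1 - k1), int (snd t + 1 - k2))"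
begin

text \<open>xfits a j: a word whose only ones are in the x-block, the last one at position j, has its
  corner in the support of S/I in multidegree a.\<close>
definition xfits :: "mdeg \<Rightarrow> nat \<Rightarrow> bool" where
  "xfits a j = in_quot E (int (fst t) - int k1 + 1 + int j, snd (ptrunc t a) - int k2)"
definition yfits :: "mdeg \<Rightarrow> nat \<Rightarrow> bool" where
  "yfits a j = in_quot E (fst (ptrunc t a) - int k1, int (snd t) - int k2 + 1 + int j)"
definition xtop :: "mdeg \<Rightarrow> nat" where "xtop a = Max {j. j < k1 \<and> xfits a j}"
definition ytop :: "mdeg \<Rightarrow> nat" where "ytop a = Max {j. j < k2 \<and> yfits a j}"
definition pivot :: "mdeg \<Rightarrow> bool list \<Rightarrow> nat" where
  "pivot a w = (if xblock k1 w \<noteq> {} then xtop a else k1 + ytop a)"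

lemma xfits_down: assumes "xfits a j" "j' \<le> j" shows "xfits a j'"
proof -
  have q: "in_quot E (int (fst t) - int k1 + 1 + int j, snd (ptrunc t a) - int k2)" using assms(1) by (simp add: xfits_def)
  show ?thesis unfolding xfits_def by (rule in_quot_down[OF monomial q]) (use assms(2) k_bounds q in \<open>auto simp: in_quot_def\<close>)
qed
lemma yfits_down: assumes "yfits a j" "j' \<le> j" shows "yfits a j'"
proof -
  have q: "in_quot E (fst (ptrunc t a) - int k1, int (snd t) - int k2 + 1 + int j)" using assms(1) by (simp add: yfits_def)
  show ?thesis unfolding yfits_def by (rule in_quot_down[OF monomial q]) (use assms(2) k_bounds q in \<open>auto simp: in_quot_def\<close>)
qed

lemma single_block:
  assumes "length w = k1 + k2" "nak_pred t E k1 a w"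
  shows "xblock k1 w = {} \<or> yblock k1 w = {}"
  using both_blocks_top[OF assms] not_top by blast

lemma nak_pred_xblock:
  assumes l: "length w = k1 + k2" and r: "yblock k1 w = {}" and ne: "xblock k1 w \<noteq> {}"
  shows "nak_pred t E k1 a w \<longleftrightarrow> nonneg a \<and> int (Min (xblock k1 w)) \<le> fst (ptrunc t a) \<and> int k2 \<le> snd (ptrunc t a) \<and> xfits a (Max (xblock k1 w))"
  unfolding nak_pred_blocks[OF l] using r ne by (simp add: adm_set_def corner_set_def xfits_def)

lemma nak_pred_yblock:
  assumes l: "length w = k1 + k2" and r: "xblock k1 w = {}" and ne: "yblock k1 w \<noteq> {}"
  shows "nak_pred t E k1 a w \<longleftrightarrow> nonneg a \<and> int k1 \<le> fst (ptrunc t a) \<and> int (Min (yblock k1 w)) \<le> snd (ptrunc t a) \<and> yfits a (Max (yblock k1 w))"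
  unfolding nak_pred_blocks[OF l] using r ne by (simp add: adm_set_def corner_set_def yfits_def)

lemma block_cases:
  assumes l: "length w = k1 + k2" "nak_pred t E k1 a w" "weight w > 0"
  shows "(xblock k1 w \<noteq> {} \<and> yblock k1 w = {}) \<or> (xblock k1 w = {} \<and> yblock k1 w \<noteq> {})"
proof -
  have "ones w \<noteq> {}" using assms(3) by (auto simp: weight_def)
  then have "xblock k1 w \<noteq> {} \<or> yblock k1 w \<noteq> {}" using ones_blocks[of w k1] by auto
  then show ?thesis using single_block[OF assms(1,2)] by auto
qed

lemma xblock_facts:
  assumes x: "x \<in> cells m a" and m: "m < 0" and ne: "xblock k1 x \<noteq> {}"
  shows "yblock k1 x = {}" "pivot a x = xtop a" "Max (xblock k1 x) \<le> xtop a"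
    "xtop a < k1" "xfits a (xtop a)"
    "nonneg a" "int (Min (xblock k1 x)) \<le> fst (ptrunc t a)" "int k2 \<le> snd (ptrunc t a)"
    "xfits a (Max (xblock k1 x))" "length x = k1 + k2" "- int (weight x) = m"
proof -
  have l: "length x = k1 + k2" and p: "nak_pred t E k1 a x" and c: "- int (weight x) = m"
    using x by (auto simp: cells_iff)
  show "length x = k1 + k2" "- int (weight x) = m" using l c .
  show r: "yblock k1 x = {}" using single_block[OF l p] ne by auto
  show "pivot a x = xtop a" using ne by (simp add: pivot_def)
  have pr: "nonneg a \<and> int (Min (xblock k1 x)) \<le> fst (ptrunc t a) \<and> int k2 \<le> snd (ptrunc t a) \<and> xfits a (Max (xblock k1 x))"
    using nak_pred_xblock[OF l r ne] p by simp
  then show "nonneg a" "int (Min (xblock k1 x)) \<le> fst (ptrunc t a)" "int k2 \<le> snd (ptrunc t a)"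
    "xfits a (Max (xblock k1 x))" by auto
  have fa: "Max (xblock k1 x) \<le> Max {j. j < k1 \<and> xfits a j}" "Max {j. j < k1 \<and> xfits a j} < k1"
    "xfits a (Max {j. j < k1 \<and> xfits a j})"
    using Max_bounded_pred[of "xblock k1 x" k1 "xfits a"] ne pr xblock_bound by auto
  then show "Max (xblock k1 x) \<le> xtop a" "xtop a < k1" "xfits a (xtop a)"
    by (simp_all add: xtop_def)
qed

lemma yblock_facts:
  assumes x: "x \<in> cells m a" and m: "m < 0" and ne: "xblock k1 x = {}"
  shows "yblock k1 x \<noteq> {}" "pivot a x = k1 + ytop a" "Max (yblock k1 x) \<le> ytop a"
    "ytop a < k2" "yfits a (ytop a)"
    "nonneg a" "int k1 \<le> fst (ptrunc t a)" "int (Min (yblock k1 x)) \<le> snd (ptrunc t a)"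
    "yfits a (Max (yblock k1 x))" "length x = k1 + k2" "- int (weight x) = m"
proof -
  have l: "length x = k1 + k2" and p: "nak_pred t E k1 a x" and c: "- int (weight x) = m"
    using x by (auto simp: cells_iff)
  show "length x = k1 + k2" "- int (weight x) = m" using l c .
  have "weight x > 0" using c m by simp
  then show r: "yblock k1 x \<noteq> {}" using block_cases[OF l p] ne by auto
  show "pivot a x = k1 + ytop a" using ne by (simp add: pivot_def)
  have pr: "nonneg a \<and> int k1 \<le> fst (ptrunc t a) \<and> int (Min (yblock k1 x)) \<le> snd (ptrunc t a) \<and> yfits a (Max (yblock k1 x))"
    using nak_pred_yblock[OF l ne r] p by simp
  then show "nonneg a" "int k1 \<le> fst (ptrunc t a)" "int (Min (yblock k1 x)) \<le> snd (ptrunc t a)"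
    "yfits a (Max (yblock k1 x))" by auto
  have fa: "Max (yblock k1 x) \<le> Max {j. j < k2 \<and> yfits a j}" "Max {j. j < k2 \<and> yfits a j} < k2"
    "yfits a (Max {j. j < k2 \<and> yfits a j})"
    using Max_bounded_pred[of "yblock k1 x" k2 "yfits a"] r pr yblock_bound[OF l] by auto
  then show "Max (yblock k1 x) \<le> ytop a" "ytop a < k2" "yfits a (ytop a)"
    by (simp_all add: ytop_def)
qed

lemma pivot_bound: "x \<in> cells m a \<Longrightarrow> m < 0 \<Longrightarrow> pivot a x < k1 + k2"
proof -
  assume x: "x \<in> cells m a" and m: "m < 0"
  show ?thesis
  proof (cases "xblock k1 x = {}")
    case True then show ?thesis using yblock_facts[OF x m True] by simp
  next
    case False then show ?thesis using xblock_facts[OF x m False] by simp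
  qed
qed

lemma pivot_local: "u \<in> cells m a \<Longrightarrow> m < 0 \<Longrightarrow> v \<in> cells m' a \<Longrightarrow> m' < 0 \<Longrightarrow>
   ones u \<inter> ones v \<noteq> {} \<Longrightarrow> pivot a u = pivot a v"
proof -
  assume u: "u \<in> cells m a" and m: "m < 0" and v: "v \<in> cells m' a" and m': "m' < 0"
    and i: "ones u \<inter> ones v \<noteq> {}"
  then obtain q where q: "q \<in> ones u" "q \<in> ones v" by blast
  show ?thesis
  proof (cases "q < k1")
    case True
    then have "xblock k1 u \<noteq> {}" "xblock k1 v \<noteq> {}" using q by (auto simp: xblock_eq)
    then show ?thesis using xblock_facts(2)[OF u m] xblock_facts(2)[OF v m'] by simp
  next
    case False
    then have "q - k1 \<in> yblock k1 u" "q - k1 \<in> yblock k1 v" using q by (auto simp: yblock_eq)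
    then have "xblock k1 u = {}" "xblock k1 v = {}" using xblock_facts(1)[OF u m] xblock_facts(1)[OF v m'] by auto
    then show ?thesis using yblock_facts(2)[OF u m] yblock_facts(2)[OF v m'] by simp
  qed
qed

lemma weight_xblock: "yblock k1 x = {} \<Longrightarrow> weight x = card (xblock k1 x)" using weight_blocks[of x k1] by simp
lemma weight_yblock: "xblock k1 x = {} \<Longrightarrow> weight x = card (yblock k1 x)" using weight_blocks[of x k1] by simp

text \<open>The pivot xtop a lies at or above both ones of x.  Removing it leaves
  a word of weight 1, adding it a word of weight 3, and both stay admissible since the
  corner does not increase.\<close>
lemma pivot_remove_x:
  assumes x: "x \<in> cells (-2) a" and xl: "x ! pivot a x" and xne: "xblock k1 x \<noteq> {}"
  shows "x[pivot a x := False] \<in> cells (-1) a"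
proof -
  note f = xblock_facts[OF x _ xne, simplified]
  let ?J = "xtop a"
  let ?F = "xblock k1 x"
  have Jl: "?J < length x" using f k_bounds by simp
  have JF: "?J \<in> ?F" using xl f Jl by (simp add: xblock_eq ones_def)
  have c2: "card ?F = 2" using f weight_xblock[of x] by simp
  have rm: "?F - {?J} \<noteq> {}" "Min (?F - {?J}) = Min ?F" "Max (?F - {?J}) \<le> Max ?F"
    using card2_remove_max[OF c2 JF \<open>Max ?F \<le> ?J\<close>] .
  let ?y = "x[?J := False]"
  have Ly: "xblock k1 ?y = ?F - {?J}" using Jl f by (simp add: xblock_update)
  have Ry: "yblock k1 ?y = {}" using Jl f by (simp add: yblock_update)
  have ly: "length ?y = k1 + k2" using f by simp
  have ne': "xblock k1 ?y \<noteq> {}" using Ly rm by simp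
  have "xfits a (Max (xblock k1 ?y))" using xfits_down[OF \<open>xfits a (Max ?F)\<close>] rm Ly by simp
  then have "nak_pred t E k1 a ?y" unfolding nak_pred_xblock[OF ly Ry ne'] using f rm Ly by simp
  moreover have "weight ?y = 1" using weight_xblock[OF Ry] Ly c2 JF by simp
  ultimately show ?thesis using f ly by (simp add: cells_iff)
qed

lemma pivot_remove_y:
  assumes x: "x \<in> cells (-2) a" and xl: "x ! pivot a x" and xe: "xblock k1 x = {}"
  shows "x[pivot a x := False] \<in> cells (-1) a"
proof -
  note f = yblock_facts[OF x _ xe, simplified]
  let ?J = "ytop a"
  let ?F = "yblock k1 x"
  have Jl: "k1 + ?J < length x" using f by simp
  have JF: "?J \<in> ?F" using xl f Jl by (simp add: yblock_eq ones_def)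
  have c2: "card ?F = 2" using f weight_yblock[OF xe] by simp
  have rm: "?F - {?J} \<noteq> {}" "Min (?F - {?J}) = Min ?F" "Max (?F - {?J}) \<le> Max ?F"
    using card2_remove_max[OF c2 JF \<open>Max ?F \<le> ?J\<close>] .
  let ?y = "x[k1 + ?J := False]"
  have Ly: "yblock k1 ?y = ?F - {?J}" using Jl f by (simp add: yblock_update)
  have Ry: "xblock k1 ?y = {}" using Jl xe by (simp add: xblock_update)
  have ly: "length ?y = k1 + k2" using f by simp
  have ne': "yblock k1 ?y \<noteq> {}" using Ly rm by simp
  have "yfits a (Max (yblock k1 ?y))" using yfits_down[OF \<open>yfits a (Max ?F)\<close>] rm Ly by simp
  then have "nak_pred t E k1 a ?y" unfolding nak_pred_yblock[OF ly Ry ne'] using f rm Ly by simp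
  moreover have "weight ?y = 1" using weight_yblock[OF Ry] Ly c2 JF by simp
  ultimately show ?thesis using f ly by (simp add: cells_iff)
qed

lemma pivot_remove:
  assumes x: "x \<in> cells (-2) a" and xl: "x ! pivot a x"
  shows "x[pivot a x := False] \<in> cells (-1) a"
  using pivot_remove_x[OF assms] pivot_remove_y[OF assms] by blast


lemma pivot_add_x:
  assumes x: "x \<in> cells (-2) a" and xl: "\<not> x ! pivot a x" and xne: "xblock k1 x \<noteq> {}"
  shows "x[pivot a x := True] \<in> cells (-3) a"
proof -
  note f = xblock_facts[OF x _ xne, simplified]
  let ?J = "xtop a"
  let ?F = "xblock k1 x"
  have Jl: "?J < length x" using f k_bounds by simp
  have JF: "?J \<notin> ?F" using xl f by (simp add: xblock_eq ones_def)
  have c2: "card ?F = 2" using f weight_xblock[of x] by simp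
  have ib: "Max (insert ?J ?F) = ?J" "Min (insert ?J ?F) \<le> Min ?F" using Max_Min_insert_big[of ?F ?J] xne f by auto
  let ?y = "x[?J := True]"
  have Ly: "xblock k1 ?y = insert ?J ?F" using Jl f by (simp add: xblock_update)
  have Ry: "yblock k1 ?y = {}" using Jl f by (simp add: yblock_update)
  have ly: "length ?y = k1 + k2" using f by simp
  have ne': "xblock k1 ?y \<noteq> {}" using Ly by simp
  have "nak_pred t E k1 a ?y" unfolding nak_pred_xblock[OF ly Ry ne'] using f ib Ly by auto
  moreover have "weight ?y = 3" using weight_xblock[OF Ry] Ly c2 JF by simp
  ultimately show ?thesis using f ly by (simp add: cells_iff)
qed

lemma pivot_add_y:
  assumes x: "x \<in> cells (-2) a" and xl: "\<not> x ! pivot a x" and xe: "xblock k1 x = {}"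
  shows "x[pivot a x := True] \<in> cells (-3) a"
proof -
  note f = yblock_facts[OF x _ xe, simplified]
  let ?J = "ytop a"
  let ?F = "yblock k1 x"
  have Jl: "k1 + ?J < length x" using f by simp
  have JF: "?J \<notin> ?F" using xl f by (simp add: yblock_eq ones_def)
  have c2: "card ?F = 2" using f weight_yblock[OF xe] by simp
  have ib: "Max (insert ?J ?F) = ?J" "Min (insert ?J ?F) \<le> Min ?F" using Max_Min_insert_big[of ?F ?J] f by auto
  let ?y = "x[k1 + ?J := True]"
  have Ly: "yblock k1 ?y = insert ?J ?F" using Jl f by (simp add: yblock_update)
  have Ry: "xblock k1 ?y = {}" using Jl xe by (simp add: xblock_update)
  have ly: "length ?y = k1 + k2" using f by simp
  have ne': "yblock k1 ?y \<noteq> {}" using Ly by simp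
  have "nak_pred t E k1 a ?y" unfolding nak_pred_yblock[OF ly Ry ne'] using f ib Ly by auto
  moreover have "weight ?y = 3" using weight_yblock[OF Ry] Ly c2 JF by simp
  ultimately show ?thesis using f ly by (simp add: cells_iff)
qed

lemma pivot_add:
  assumes x: "x \<in> cells (-2) a" and xl: "\<not> x ! pivot a x"
  shows "x[pivot a x := True] \<in> cells (-3) a"
  using pivot_add_x[OF assms] pivot_add_y[OF assms] by blast


lemma pivot_exchange_x:
  assumes x: "x \<in> cells (-2) a" and xl: "x ! pivot a x"
    and p: "p < k1 + k2" "\<not> x ! p" "p \<noteq> pivot a x"
    and x2: "x[pivot a x := False, p := True] \<in> cells (-2) a" and xne: "xblock k1 x \<noteq> {}"
  shows "p < pivot a x \<and> x[p := True] \<in> cells (-3) a"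
proof -
  note f = xblock_facts[OF x _ xne, simplified]
  let ?J = "xtop a"
  let ?F = "xblock k1 x"
  have Jl: "?J < length x" using f k_bounds by simp
  have JF: "?J \<in> ?F" using xl f Jl by (simp add: xblock_eq ones_def)
  have c2: "card ?F = 2" using f weight_xblock[of x] by simp
  have rm: "?F - {?J} \<noteq> {}" using card2_remove_max[OF c2 JF \<open>Max ?F \<le> ?J\<close>] by blast
  have MJ: "Max ?F = ?J" using Max_ge[OF finite_xblock JF] \<open>Max ?F \<le> ?J\<close> by simp
  let ?y = "x[?J := False]"
  have Ly: "xblock k1 ?y = ?F - {?J}" using Jl f by (simp add: xblock_update)
  have Ry: "yblock k1 ?y = {}" using Jl f by (simp add: yblock_update)
  have pl: "p < length ?y" using p f by simp
  have x2': "?y[p := True] \<in> cells (-2) a" using x2 f by simp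
  have pk: "p < k1"
  proof (rule ccontr)
    assume "\<not> p < k1"
    then have "yblock k1 (?y[p := True]) \<noteq> {}" "xblock k1 (?y[p := True]) \<noteq> {}" using pl Ly rm by (simp_all add: yblock_update xblock_update)
    then show False using xblock_facts(1)[OF x2' _] by auto
  qed
  have L2: "xblock k1 (?y[p := True]) = insert p (?F - {?J})" using pl pk Ly by (simp add: xblock_update)
  have "Max (xblock k1 (?y[p := True])) \<le> ?J" using xblock_facts(3)[OF x2' _] L2 by simp
  then have "p \<le> ?J" using L2 Max_ge[of "xblock k1 (?y[p := True])" p] by simp
  then have pJ: "p < ?J" using p f by simp
  let ?z = "x[p := True]"
  have xpl: "p < length x" using p f by simp
  have pF: "p \<notin> ?F" using p xpl by (simp add: xblock_eq ones_def)
  have Lz: "xblock k1 ?z = insert p ?F" using xpl pk by (simp add: xblock_update)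
  have Rz: "yblock k1 ?z = {}" using xpl pk f by (simp add: yblock_update)
  have lz: "length ?z = k1 + k2" using f by simp
  have ne': "xblock k1 ?z \<noteq> {}" using Lz by simp
  have mx: "Max (insert p ?F) = Max ?F" using MJ pJ xne by (simp add: Max_insert)
  have mn: "Min (insert p ?F) \<le> Min ?F" using xne by (simp add: Min_insert)
  have "nak_pred t E k1 a ?z" unfolding nak_pred_xblock[OF lz Rz ne'] using f Lz mx mn by auto
  moreover have "weight ?z = 3" using weight_xblock[OF Rz] Lz c2 pF by simp
  ultimately show ?thesis using f lz pJ by (simp add: cells_iff)
qed

lemma pivot_exchange_y:
  assumes x: "x \<in> cells (-2) a" and xl: "x ! pivot a x"
    and p: "p < k1 + k2" "\<not> x ! p" "p \<noteq> pivot a x"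
    and x2: "x[pivot a x := False, p := True] \<in> cells (-2) a" and xe: "xblock k1 x = {}"
  shows "p < pivot a x \<and> x[p := True] \<in> cells (-3) a"
proof -
  note f = yblock_facts[OF x _ xe, simplified]
  let ?J = "ytop a"
  let ?F = "yblock k1 x"
  have Jl: "k1 + ?J < length x" using f by simp
  have JF: "?J \<in> ?F" using xl f Jl by (simp add: yblock_eq ones_def)
  have c2: "card ?F = 2" using f weight_yblock[OF xe] by simp
  have rm: "?F - {?J} \<noteq> {}" using card2_remove_max[OF c2 JF \<open>Max ?F \<le> ?J\<close>] by blast
  have MJ: "Max ?F = ?J" using Max_ge[OF finite_yblock JF] \<open>Max ?F \<le> ?J\<close> by simp
  let ?y = "x[k1 + ?J := False]"
  have Ly: "yblock k1 ?y = ?F - {?J}" using Jl f by (simp add: yblock_update)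
  have Ry: "xblock k1 ?y = {}" using Jl xe by (simp add: xblock_update)
  have pl: "p < length ?y" using p f by simp
  have x2': "?y[p := True] \<in> cells (-2) a" using x2 f by simp
  have pk: "\<not> p < k1"
  proof
    assume "p < k1"
    then have "yblock k1 (?y[p := True]) \<noteq> {}" "xblock k1 (?y[p := True]) \<noteq> {}" using pl Ly rm by (simp_all add: yblock_update xblock_update)
    then show False using xblock_facts(1)[OF x2' _] by auto
  qed
  have L2: "yblock k1 (?y[p := True]) = insert (p - k1) (?F - {?J})" using pl pk Ly by (simp add: yblock_update)
  have L2e: "xblock k1 (?y[p := True]) = {}" using pl pk Ry by (simp add: xblock_update)
  have "Max (yblock k1 (?y[p := True])) \<le> ?J" using yblock_facts(3)[OF x2' _ L2e] by simp
  then have "p - k1 \<le> ?J" using L2 Max_ge[of "yblock k1 (?y[p := True])" "p - k1"] by simp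
  then have pJ: "p - k1 < ?J" using p f pk by simp
  let ?z = "x[p := True]"
  have xpl: "p < length x" using p f by simp
  have pF: "p - k1 \<notin> ?F" using p xpl pk by (simp add: yblock_eq ones_def)
  have Lz: "yblock k1 ?z = insert (p - k1) ?F" using xpl pk by (simp add: yblock_update)
  have Rz: "xblock k1 ?z = {}" using xpl pk xe by (simp add: xblock_update)
  have lz: "length ?z = k1 + k2" using f by simp
  have ne': "yblock k1 ?z \<noteq> {}" using Lz by simp
  have fF: "?F \<noteq> {}" using JF by blast
  have mx: "Max (insert (p - k1) ?F) = Max ?F" using MJ pJ fF by (simp add: Max_insert)
  have mn: "Min (insert (p - k1) ?F) \<le> Min ?F" using fF by (simp add: Min_insert)
  have "nak_pred t E k1 a ?z" unfolding nak_pred_yblock[OF lz Rz ne'] using f Lz mx mn by auto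
  moreover have "weight ?z = 3" using weight_yblock[OF Rz] Lz c2 pF by simp
  ultimately show ?thesis using f lz pJ pk by (simp add: cells_iff)
qed

lemma pivot_exchange:
  assumes x: "x \<in> cells (-2) a" and xl: "x ! pivot a x"
    and p: "p < k1 + k2" "\<not> x ! p" "p \<noteq> pivot a x"
    and x2: "x[pivot a x := False, p := True] \<in> cells (-2) a"
  shows "p < pivot a x \<and> x[p := True] \<in> cells (-3) a"
  using pivot_exchange_x[OF assms] pivot_exchange_y[OF assms] by blast


lemma pivot_matching_cells: "pivot_matching (cells (-1) a) (cells (-2) a) (cells (-3) a) (k1 + k2) (pivot a)"
proof
  show "finite (cells (-1) a)" "finite (cells (-3) a)" by simp_all
  show "length x = k1 + k2" if "x \<in> cells (-1) a \<union> cells (-2) a \<union> cells (-3) a" for x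
    using that by (auto simp: cells_iff)
  show "ones y \<noteq> {}" if "y \<in> cells (-1) a" for y using that by (auto simp: cells_iff weight_def)
  show "ones x \<noteq> {}" if "x \<in> cells (-2) a" for x using that by (auto simp: cells_iff weight_def)
  show "pivot a x < k1 + k2" if "x \<in> cells (-2) a \<union> cells (-3) a" for x
    using that pivot_bound[of x "-2" a] pivot_bound[of x "-3" a] by auto
  show "x[pivot a x := False] \<in> cells (-1) a" if "x \<in> cells (-2) a" "x ! pivot a x" for x
    using pivot_remove that .
  show "x[pivot a x := True] \<in> cells (-3) a" if "x \<in> cells (-2) a" "\<not> x ! pivot a x" for x
    using pivot_add that .
  show "p < pivot a x \<and> x[p := True] \<in> cells (-3) a"
    if "x \<in> cells (-2) a" "x ! pivot a x" "p < k1 + k2" "\<not> x ! p" "p \<noteq> pivot a x"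
       "x[pivot a x := False, p := True] \<in> cells (-2) a" for x p
    using pivot_exchange that .
  show "pivot a u = pivot a v"
    if u: "u \<in> cells (-1) a \<union> cells (-2) a \<union> cells (-3) a" and v: "v \<in> cells (-1) a \<union> cells (-2) a \<union> cells (-3) a"
      and common: "ones u \<inter> ones v \<noteq> {}" for u v
  proof -
    have neg: "(-1::int) < 0" "(-2::int) < 0" "(-3::int) < 0" by simp_all
    obtain m where m: "u \<in> cells m a" "m < 0" using u neg by blast
    obtain m' where m': "v \<in> cells m' a" "m' < 0" using v neg by blast
    show ?thesis by (rule pivot_local[OF m m' common])
  qed
qed

theorem homology_vanishes: "homology_zero (cube_cx (k1 + k2) (nak_pred t E k1) :: 'k::field gcx) (-2)"
  unfolding homology_zero_cube_iff
proof
  fix a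
  interpret pivot_matching "cells (-1) a" "cells (-2) a" "cells (-3) a" "k1 + k2" "pivot a"
    by (rule pivot_matching_cells)
  let ?B = "\<lambda>m. cube_basis (k1 + k2) (nak_pred t E k1) m a"
  have "exact_at (cube_coeff :: _ \<Rightarrow> _ \<Rightarrow> 'k) (?B (-1)) (?B (-2)) (?B (-3))"
    by (rule exact_by_homotopy[where h = "homotopy_coeff (pivot a)"]) (simp_all add: homotopy_identity)
  then show "exact_at (cube_coeff :: _ \<Rightarrow> _ \<Rightarrow> 'k) (?B (-2 + 1)) (?B (-2)) (?B (-2 - 1))" by simp
qed

end

context nak_window
begin

theorem homology_zero_iff_top:
  "homology_zero (cube_cx (k1 + k2) (nak_pred t E k1) :: 'k::field gcx) (-2) \<longleftrightarrow> \<not> in_quot E top_monomial"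
proof
  show "\<not> in_quot E top_monomial" if "homology_zero (cube_cx (k1 + k2) (nak_pred t E k1) :: 'k gcx) (-2)"
    using homology_nonzero that by blast
  assume "\<not> in_quot E top_monomial"
  then interpret nak_window_vanishing t k1 k2 E by unfold_locales
  show "homology_zero (cube_cx (k1 + k2) (nak_pred t E k1) :: 'k gcx) (-2)" by (rule homology_vanishes)
qed

end

theorem mainTheorem13:
  fixes t k :: "nat \<times> nat" and E :: "(nat \<times> nat) set"
  assumes "1 \<le> fst k" and "1 \<le> snd k"
    and "fst k \<le> fst t + 1" and "snd k \<le> snd t + 1"
    and "pos_t_determined_ideal t E"
  shows "cohomology_zero (nak t k (quot_cx E :: 'k::field gcx)) 2 \<longleftrightarrow>
         (\<forall>m. gdim (quot_cx E :: 'k gcx) m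
                 (int (fst t + 1 - fst k), int (snd t + 1 - snd k)) = 0)"
proof -
  have E: "monomial_ideal_exps E" using assms(5) by (simp add: pos_t_determined_ideal_def)
  interpret nak_window t "fst k" "snd k" E
    using assms(1-4) E by unfold_locales
  have "nak t k (quot_cx E :: 'k gcx) = cube_cx (fst k + snd k) (nak_pred t E (fst k))"
    using nak_quot_cube[OF assms(5)] assms(3,4) by simp
  moreover have "(\<forall>m. gdim (quot_cx E :: 'k gcx) m top_monomial = 0) \<longleftrightarrow> \<not> in_quot E top_monomial"
    by (auto simp: quot_cx_def qdim_def)
  ultimately show ?thesis unfolding cohomology_zero_def using homology_zero_iff_top by simp
qed

end
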